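(* Let $F$ be a compact metric space and $m$ a finite Radon measure on $F$. Suppose that $(\mathcal{A},\mathcal{F})$ and $(\mathcal{B},\mathcal{F})$ are local, regular, conservative, irreducible Dirichlet forms on $L^2(F,m)$ with the same domain $\mathcal{F}$, and that $\mathcal{A}(u,u)\le\mathcal{B}(u,u)$ for all $u\in\mathcal{F}$. Let $\delta>0$ and $\mathcal{E}=(1+\delta)\mathcal{B}-\mathcal{A}$. Then $(\mathcal{E},\mathcal{F})$ is a regular, local, conservative, irreducible Dirichlet form on $L^2(F,m)$. *)

theory Defs
  imports "HOL-Analysis.Analysis"
begin

text \<open>Elements of L^2(F,m) are represented by (measurable, square integrable) functions;
  forms are required to be compatible with a.e. equality.\<close>

definition L2 :: "'a measure \<Rightarrow> ('a \<Rightarrow> real) set" where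
  "L2 M = {u. u \<in> borel_measurable M \<and> integrable M (\<lambda>x. (u x)^2)}"

definition ip :: "'a measure \<Rightarrow> ('a \<Rightarrow> real) \<Rightarrow> ('a \<Rightarrow> real) \<Rightarrow> real" where
  "ip M u v = integral\<^sup>L M (\<lambda>x. u x * v x)"

definition E1 :: "'a measure \<Rightarrow> (('a \<Rightarrow> real) \<Rightarrow> ('a \<Rightarrow> real) \<Rightarrow> real) \<Rightarrow> ('a \<Rightarrow> real) \<Rightarrow> real" where
  "E1 M E u = E u u + ip M u u"

definition symmetric_form ::
  "'a measure \<Rightarrow> ('a \<Rightarrow> real) set \<Rightarrow> (('a \<Rightarrow> real) \<Rightarrow> ('a \<Rightarrow> real) \<Rightarrow> real) \<Rightarrow> bool" where
  "symmetric_form M D E \<longleftrightarrow>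
     D \<subseteq> L2 M \<and> (\<lambda>x. 0) \<in> D
   \<and> (\<forall>u\<in>D. \<forall>v\<in>D. (\<lambda>x. u x + v x) \<in> D)
   \<and> (\<forall>c::real. \<forall>u\<in>D. (\<lambda>x. c * u x) \<in> D)
   \<and> (\<forall>u\<in>D. \<forall>v\<in>L2 M. (AE x in M. u x = v x) \<longrightarrow> v \<in> D \<and> (\<forall>w\<in>D. E u w = E v w))
   \<and> (\<forall>u\<in>D. \<forall>v\<in>D. E u v = E v u)
   \<and> (\<forall>u\<in>D. \<forall>v\<in>D. \<forall>w\<in>D. E (\<lambda>x. u x + v x) w = E u w + E v w)
   \<and> (\<forall>c::real. \<forall>u\<in>D. \<forall>w\<in>D. E (\<lambda>x. c * u x) w = c * E u w)
   \<and> (\<forall>u\<in>D. E u u \<ge> 0)"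

definition dense_domain :: "'a measure \<Rightarrow> ('a \<Rightarrow> real) set \<Rightarrow> bool" where
  "dense_domain M D \<longleftrightarrow>
     (\<forall>f\<in>L2 M. \<forall>e>0. \<exists>u\<in>D. ip M (\<lambda>x. f x - u x) (\<lambda>x. f x - u x) < e)"

definition closed_form ::
  "'a measure \<Rightarrow> ('a \<Rightarrow> real) set \<Rightarrow> (('a \<Rightarrow> real) \<Rightarrow> ('a \<Rightarrow> real) \<Rightarrow> real) \<Rightarrow> bool" where
  "closed_form M D E \<longleftrightarrow>
     (\<forall>s :: nat \<Rightarrow> 'a \<Rightarrow> real. (\<forall>n. s n \<in> D) \<and>
        (\<forall>e>0. \<exists>N. \<forall>n\<ge>N. \<forall>k\<ge>N. E1 M E (\<lambda>x. s n x - s k x) < e)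
      \<longrightarrow> (\<exists>u\<in>D. (\<lambda>n. E1 M E (\<lambda>x. s n x - u x)) \<longlonglongrightarrow> 0))"

definition markovian ::
  "'a measure \<Rightarrow> ('a \<Rightarrow> real) set \<Rightarrow> (('a \<Rightarrow> real) \<Rightarrow> ('a \<Rightarrow> real) \<Rightarrow> real) \<Rightarrow> bool" where
  "markovian M D E \<longleftrightarrow>
     (\<forall>u\<in>D. (\<lambda>x. min 1 (max 0 (u x))) \<in> D \<and>
        E (\<lambda>x. min 1 (max 0 (u x))) (\<lambda>x. min 1 (max 0 (u x))) \<le> E u u)"

definition dirichlet_form ::
  "'a measure \<Rightarrow> ('a \<Rightarrow> real) set \<Rightarrow> (('a \<Rightarrow> real) \<Rightarrow> ('a \<Rightarrow> real) \<Rightarrow> real) \<Rightarrow> bool" where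
  "dirichlet_form M D E \<longleftrightarrow>
     symmetric_form M D E \<and> dense_domain M D \<and> closed_form M D E \<and> markovian M D E"

text \<open>Regularity (the state space F = space M is compact, so C_c(F) = C(F)).\<close>
definition regular_form ::
  "'a::topological_space measure \<Rightarrow> ('a \<Rightarrow> real) set \<Rightarrow> (('a \<Rightarrow> real) \<Rightarrow> ('a \<Rightarrow> real) \<Rightarrow> real) \<Rightarrow> bool" where
  "regular_form M D E \<longleftrightarrow>
     (\<forall>u\<in>D. \<forall>e>0. \<exists>v\<in>D. continuous_on (space M) v \<and> E1 M E (\<lambda>x. u x - v x) < e)
   \<and> (\<forall>g. continuous_on (space M) g \<longrightarrow>
        (\<forall>e>0. \<exists>v\<in>D. continuous_on (space M) v \<and> (\<forall>x\<in>space M. \<bar>v x - g x\<bar> < e)))"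

definition fn_support :: "'a::topological_space measure \<Rightarrow> ('a \<Rightarrow> real) \<Rightarrow> 'a set" where
  "fn_support M u = space M - \<Union>{U. open U \<and> (AE x in M. x \<in> U \<longrightarrow> u x = 0)}"

definition local_form ::
  "'a::topological_space measure \<Rightarrow> ('a \<Rightarrow> real) set \<Rightarrow> (('a \<Rightarrow> real) \<Rightarrow> ('a \<Rightarrow> real) \<Rightarrow> real) \<Rightarrow> bool" where
  "local_form M D E \<longleftrightarrow>
     (\<forall>u\<in>D. \<forall>v\<in>D. compact (fn_support M u) \<and> compact (fn_support M v) \<and>
        fn_support M u \<inter> fn_support M v = {} \<longrightarrow> E u v = 0)"

text \<open>u = G_alpha f, the alpha-resolvent of f (unique solution in D of E_alpha(u,v) = (f,v)).\<close>
definition resolvent_sol ::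
  "'a measure \<Rightarrow> ('a \<Rightarrow> real) set \<Rightarrow> (('a \<Rightarrow> real) \<Rightarrow> ('a \<Rightarrow> real) \<Rightarrow> real) \<Rightarrow> real
     \<Rightarrow> ('a \<Rightarrow> real) \<Rightarrow> ('a \<Rightarrow> real) \<Rightarrow> bool" where
  "resolvent_sol M D E \<alpha> f u \<longleftrightarrow> u \<in> D \<and> (\<forall>v\<in>D. E u v + \<alpha> * ip M u v = ip M f v)"

text \<open>Conservativeness: alpha G_alpha 1 = 1 for all alpha > 0 (equivalently T_t 1 = 1).\<close>
definition conservative_form ::
  "'a measure \<Rightarrow> ('a \<Rightarrow> real) set \<Rightarrow> (('a \<Rightarrow> real) \<Rightarrow> ('a \<Rightarrow> real) \<Rightarrow> real) \<Rightarrow> bool" where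
  "conservative_form M D E \<longleftrightarrow> (\<forall>\<alpha>>0. resolvent_sol M D E \<alpha> (\<lambda>x. 1) (\<lambda>x. 1 / \<alpha>))"

definition invariant_set ::
  "'a measure \<Rightarrow> ('a \<Rightarrow> real) set \<Rightarrow> (('a \<Rightarrow> real) \<Rightarrow> ('a \<Rightarrow> real) \<Rightarrow> real) \<Rightarrow> 'a set \<Rightarrow> bool" where
  "invariant_set M D E A \<longleftrightarrow> A \<in> sets M \<and>
     (\<forall>\<alpha>>0. \<forall>f\<in>L2 M. \<forall>u. resolvent_sol M D E \<alpha> f u \<longrightarrow>
        resolvent_sol M D E \<alpha> (\<lambda>x. indicator A x * f x) (\<lambda>x. indicator A x * u x))"

definition irreducible_form ::
  "'a measure \<Rightarrow> ('a \<Rightarrow> real) set \<Rightarrow> (('a \<Rightarrow> real) \<Rightarrow> ('a \<Rightarrow> real) \<Rightarrow> real) \<Rightarrow> bool" where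
  "irreducible_form M D E \<longleftrightarrow>
     (\<forall>A. invariant_set M D E A \<longrightarrow> emeasure M A = 0 \<or> emeasure M (space M - A) = 0)"

definition radon_measure :: "'a::topological_space measure \<Rightarrow> bool" where
  "radon_measure M \<longleftrightarrow>
     (\<forall>K. compact K \<and> K \<subseteq> space M \<longrightarrow> emeasure M K < \<infinity>) \<and>
     (\<forall>B\<in>sets M. emeasure M B = (SUP K\<in>{K. compact K \<and> K \<subseteq> B}. emeasure M K))"

end

theory Submission
  imports Defs
begin

text \<open>Since \<open>A \<le> B\<close>, the form \<open>E = (1 + \<delta>) B - A\<close> satisfies \<open>\<delta> B \<le> E \<le> (1 + \<delta>) B\<close> on the
  diagonal, so its \<open>E\<^sub>1\<close>-norm is equivalent to that of \<open>B\<close>: closedness, regularity, locality and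
  conservativeness transfer directly. The Markov property is the real point, as \<open>E\<close> is a
  difference of forms. For continuous \<open>v\<close> in the domain and the unit contraction \<open>T\<close>, locality
  of both \<open>A\<close> and \<open>B\<close> gives \<open>A(Tv, v - Tv) = B(Tv, v - Tv) = 0\<close>, hence
  \<open>E(v, v) = E(Tv, Tv) + E(v - Tv, v - Tv) \<ge> E(Tv, Tv)\<close>; regularity and the lower
  semicontinuity of closed forms extend this to the whole domain. For irreducibility, an
  \<open>E\<close>-invariant set \<open>\<Omega>\<close> has \<open>1\<^sub>\<Omega>\<close> in the domain with \<open>E(1\<^sub>\<Omega>, 1\<^sub>\<Omega>) = 0\<close>, hence
  \<open>B(1\<^sub>\<Omega>, 1\<^sub>\<Omega>) = 0\<close>; the Markov property of \<open>B\<close> then splits every function of the domain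
  into the \<open>B\<close>-orthogonal pieces \<open>1\<^sub>\<Omega> u\<close> and \<open>1\<^sub>\<Omega>\<^sub>c u\<close>, so \<open>\<Omega>\<close> is \<open>B\<close>-invariant.\<close>

section \<open>Square-integrable functions\<close>

abbreviation L2_sqdist :: "'a measure \<Rightarrow> ('a \<Rightarrow> real) \<Rightarrow> ('a \<Rightarrow> real) \<Rightarrow> real" where
  "L2_sqdist M u v \<equiv> ip M (\<lambda>x. u x - v x) (\<lambda>x. u x - v x)"

lemma L2_I:
  assumes u: "u \<in> borel_measurable M" and g: "integrable M g"
    and le: "\<And>x. x \<in> space M \<Longrightarrow> (u x)^2 \<le> g x"
  shows "u \<in> L2 M"
proof -
  have "integrable M (\<lambda>x. (u x)^2)"
  proof (rule Bochner_Integration.integrable_bound[OF g])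
    show "AE x in M. norm ((u x)^2) \<le> norm (g x)"
      using le by (intro AE_I2) (smt (verit) real_norm_def zero_le_power2)
  qed (use u in measurable)
  with u show ?thesis by (simp add: L2_def)
qed

lemma L2_add: "u \<in> L2 M \<Longrightarrow> v \<in> L2 M \<Longrightarrow> (\<lambda>x. u x + v x) \<in> L2 M"
proof (rule L2_I[where g = "\<lambda>x. 2 * (u x)^2 + 2 * (v x)^2"])
  show "((u x) + v x)^2 \<le> 2 * (u x)^2 + 2 * (v x)^2" for x
    using zero_le_power2[of "u x - v x"] by (simp add: power2_eq_square algebra_simps)
qed (auto simp: L2_def)

lemma L2_cmult: "u \<in> L2 M \<Longrightarrow> (\<lambda>x. c * u x) \<in> L2 M"
  by (rule L2_I[where g = "\<lambda>x. c^2 * (u x)^2"]) (auto simp: L2_def power_mult_distrib)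

lemma L2_diff: "u \<in> L2 M \<Longrightarrow> v \<in> L2 M \<Longrightarrow> (\<lambda>x. u x - v x) \<in> L2 M"
  using L2_add[of u M "\<lambda>x. -1 * v x"] L2_cmult[of v M "-1"] by simp

lemma L2_const: "finite_measure M \<Longrightarrow> (\<lambda>x. c) \<in> L2 M"
  by (simp add: L2_def finite_measure.integrable_const)

lemma ip_self_eq_integral: "ip M u u = (\<integral>x. (u x)^2 \<partial>M)"
  by (simp add: ip_def power2_eq_square)

lemma ip_self_nonneg: "0 \<le> ip M u u"
  by (simp add: ip_def)

lemma ip_self_le_integral:
  assumes "u \<in> borel_measurable M" "integrable M g" "\<And>x. x \<in> space M \<Longrightarrow> (u x)^2 \<le> g x"
  shows "ip M u u \<le> (\<integral>x. g x \<partial>M)"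
proof -
  have "integrable M (\<lambda>x. (u x)^2)"
    using L2_I[OF assms] by (simp add: L2_def)
  with assms show ?thesis
    unfolding ip_self_eq_integral by (intro integral_mono) auto
qed

lemma ip_self_le_bound:
  assumes "finite_measure M" "u \<in> borel_measurable M" "\<And>x. x \<in> space M \<Longrightarrow> \<bar>u x\<bar> \<le> c"
  shows "ip M u u \<le> c^2 * measure M (space M)"
proof -
  have "ip M u u \<le> (\<integral>x. c^2 \<partial>M)"
  proof (rule ip_self_le_integral)
    show "(u x)^2 \<le> c^2" if "x \<in> space M" for x
      using power_mono[OF assms(3)[OF that] abs_ge_zero, of 2] by simp
  qed (use assms in \<open>auto simp: finite_measure.integrable_const\<close>)
  then show ?thesis by (simp add: mult.commute)
qed

lemma AE_eq_0_if_ip_self_eq_0: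
  assumes u: "u \<in> L2 M" and "ip M u u = 0"
  shows "AE x in M. u x = 0"
proof -
  have "integrable M (\<lambda>x. (u x)^2)" using u by (simp add: L2_def)
  then have "(\<integral>x. (u x)^2 \<partial>M) = 0 \<longleftrightarrow> (AE x in M. (u x)^2 = 0)"
    by (intro integral_nonneg_eq_0_iff_AE) auto
  with assms(2) show ?thesis by (simp add: ip_self_eq_integral)
qed

lemma ip_self_cmult: "ip M (\<lambda>x. c * u x) (\<lambda>x. c * u x) = c^2 * ip M u u"
  by (simp add: ip_def power2_eq_square algebra_simps)

lemma L2_sqdist_commute: "L2_sqdist M u v = L2_sqdist M v u"
  unfolding ip_def by (rule Bochner_Integration.integral_cong) (auto simp: algebra_simps)

lemma L2_sqdist_le_pointwise:
  assumes "u \<in> L2 M" "v \<in> L2 M" "(\<lambda>x. f x - g x) \<in> borel_measurable M"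
    and "\<And>x. x \<in> space M \<Longrightarrow> \<bar>f x - g x\<bar> \<le> \<bar>u x - v x\<bar>"
  shows "L2_sqdist M f g \<le> L2_sqdist M u v"
proof -
  have "L2_sqdist M f g \<le> (\<integral>x. (u x - v x)^2 \<partial>M)"
  proof (rule ip_self_le_integral)
    show "integrable M (\<lambda>x. (u x - v x)^2)"
      using L2_diff[OF assms(1,2)] by (simp add: L2_def)
    show "(f x - g x)^2 \<le> (u x - v x)^2" if "x \<in> space M" for x
      using power_mono[OF assms(4)[OF that] abs_ge_zero, of 2] by simp
  qed (fact assms(3))
  then show ?thesis by (simp add: ip_self_eq_integral)
qed

lemma L2_sqdist_unit_contraction_le:
  assumes "u \<in> L2 M" "v \<in> L2 M"
  shows "L2_sqdist M (\<lambda>x. min 1 (max 0 (u x))) (\<lambda>x. min 1 (max 0 (v x))) \<le> L2_sqdist M u v"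
proof (rule L2_sqdist_le_pointwise[OF assms])
  have [measurable]: "u \<in> borel_measurable M" "v \<in> borel_measurable M"
    using assms by (auto simp: L2_def)
  show "(\<lambda>x. min 1 (max 0 (u x)) - min 1 (max 0 (v x))) \<in> borel_measurable M"
    by measurable
  show "\<bar>min 1 (max 0 (u x)) - min 1 (max 0 (v x))\<bar> \<le> \<bar>u x - v x\<bar>" for x
    by (auto simp: min_def max_def abs_le_iff)
qed

lemma L2_sqdist_triangle:
  assumes "u \<in> L2 M" "v \<in> L2 M" "w \<in> L2 M"
  shows "L2_sqdist M u w \<le> 2 * L2_sqdist M u v + 2 * L2_sqdist M v w"
proof -
  have uv: "(\<lambda>x. u x - v x) \<in> L2 M" and vw: "(\<lambda>x. v x - w x) \<in> L2 M"
    using assms by (auto intro: L2_diff)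
  have "L2_sqdist M u w \<le> (\<integral>x. 2 * (u x - v x)^2 + 2 * (v x - w x)^2 \<partial>M)"
  proof (rule ip_self_le_integral)
    show "(u x - w x)^2 \<le> 2 * (u x - v x)^2 + 2 * (v x - w x)^2" for x
      using zero_le_power2[of "u x - 2 * v x + w x"] by (simp add: power2_eq_square algebra_simps)
  qed (use assms uv vw in \<open>auto simp: L2_def\<close>)
  also have "\<dots> = 2 * L2_sqdist M u v + 2 * L2_sqdist M v w"
    using uv vw by (simp add: ip_self_eq_integral L2_def)
  finally show ?thesis .
qed

lemma L2_truncation_tendsto:
  assumes u: "u \<in> L2 M"
  shows "(\<lambda>n. L2_sqdist M (\<lambda>x. min (real n + 1) (max (- (real n + 1)) (u x))) u) \<longlonglongrightarrow> 0"
proof -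
  have [measurable]: "u \<in> borel_measurable M" using u by (simp add: L2_def)
  define s where "s n x = (min (real n + 1) (max (- (real n + 1)) (u x)) - u x)^2" for n x
  have "(\<lambda>n. \<integral>x. s n x \<partial>M) \<longlonglongrightarrow> (\<integral>x. 0 \<partial>M)"
  proof (rule integral_dominated_convergence[where w = "\<lambda>x. (u x)^2"])
    show "integrable M (\<lambda>x. (u x)^2)" using u by (simp add: L2_def)
    show "AE x in M. (\<lambda>n. s n x) \<longlonglongrightarrow> 0"
    proof (rule AE_I2)
      fix x
      have "s n x = 0" if "n \<ge> nat \<lceil>\<bar>u x\<bar>\<rceil>" for n
      proof -
        from that have "\<bar>u x\<bar> \<le> real n" by linarith
        then show ?thesis by (auto simp: s_def min_def max_def abs_le_iff)
      qed
      then have "eventually (\<lambda>n. s n x = 0) sequentially"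
        unfolding eventually_sequentially by blast
      then show "(\<lambda>n. s n x) \<longlonglongrightarrow> 0"
        by (rule tendsto_eventually)
    qed
    show "AE x in M. norm (s n x) \<le> (u x)^2" for n
    proof (rule AE_I2)
      fix x
      have "\<bar>min (real n + 1) (max (- (real n + 1)) (u x)) - u x\<bar> \<le> \<bar>u x\<bar>"
        by (auto simp: min_def max_def abs_le_iff)
      from power_mono[OF this abs_ge_zero, of 2] show "norm (s n x) \<le> (u x)^2"
        by (simp add: s_def)
    qed
  qed (auto simp: s_def)
  then show ?thesis
    by (simp add: ip_self_eq_integral s_def[abs_def])
qed

lemma L2_weighted_truncation_tendsto:
  assumes u: "u \<in> L2 M" and \<rho>: "\<rho> \<in> borel_measurable M" "\<And>x. \<rho> x \<in> {0, 1}"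
  shows "(\<lambda>n. L2_sqdist M (\<lambda>x. \<rho> x * min (real n + 1) (max (- (real n + 1)) (u x)))
      (\<lambda>x. \<rho> x * u x)) \<longlonglongrightarrow> 0"
proof (rule tendsto_sandwich[OF _ _ tendsto_const L2_truncation_tendsto[OF u]])
  have "(\<lambda>x. min (real n + 1) (max (- (real n + 1)) (u x))) \<in> L2 M" for n
  proof (rule L2_I[where g = "\<lambda>x. (u x)^2"])
    show "(min (real n + 1) (max (- (real n + 1)) (u x)))^2 \<le> (u x)^2" for x
    proof -
      have "\<bar>min (real n + 1) (max (- (real n + 1)) (u x))\<bar> \<le> \<bar>u x\<bar>"
        by (auto simp: min_def max_def abs_le_iff)
      from power_mono[OF this abs_ge_zero, of 2] show ?thesis by simp
    qed
  qed (use u in \<open>auto simp: L2_def\<close>)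
  then show "\<forall>\<^sub>F n in sequentially. L2_sqdist M (\<lambda>x. \<rho> x * min (real n + 1) (max (- (real n + 1)) (u x)))
      (\<lambda>x. \<rho> x * u x) \<le> L2_sqdist M (\<lambda>x. min (real n + 1) (max (- (real n + 1)) (u x))) u"
  proof (intro always_eventually allI L2_sqdist_le_pointwise)
    show "\<bar>\<rho> x * a - \<rho> x * b\<bar> \<le> \<bar>a - b\<bar>" for x and a b :: real
      using \<rho>(2)[of x] by auto
  qed (use u \<rho> in \<open>auto simp: L2_def\<close>)
qed (auto intro: always_eventually ip_self_nonneg)

section \<open>Nonnegative symmetric forms\<close>

locale sym_form =
  fixes M :: "'a measure" and D :: "('a \<Rightarrow> real) set"
    and E :: "('a \<Rightarrow> real) \<Rightarrow> ('a \<Rightarrow> real) \<Rightarrow> real"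
  assumes symmetric: "symmetric_form M D E"
begin

lemma in_L2: "u \<in> D \<Longrightarrow> u \<in> L2 M"
  using symmetric by (auto simp: symmetric_form_def)

lemma zero_in: "(\<lambda>x. 0) \<in> D"
  using symmetric unfolding symmetric_form_def by blast

lemma add_in: "u \<in> D \<Longrightarrow> v \<in> D \<Longrightarrow> (\<lambda>x. u x + v x) \<in> D"
  using symmetric unfolding symmetric_form_def by blast

lemma cmult_in: "u \<in> D \<Longrightarrow> (\<lambda>x. c * u x) \<in> D"
  using symmetric unfolding symmetric_form_def by blast

lemma diff_in: "u \<in> D \<Longrightarrow> v \<in> D \<Longrightarrow> (\<lambda>x. u x - v x) \<in> D"
  using add_in[of u "\<lambda>x. -1 * v x"] cmult_in[of v "-1"] by simp

lemma AE_eq_in: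
  "u \<in> D \<Longrightarrow> v \<in> L2 M \<Longrightarrow> AE x in M. u x = v x \<Longrightarrow> v \<in> D \<and> (\<forall>w\<in>D. E u w = E v w)"
  using symmetric unfolding symmetric_form_def by blast

lemma commute: "u \<in> D \<Longrightarrow> v \<in> D \<Longrightarrow> E u v = E v u"
  using symmetric unfolding symmetric_form_def by blast

lemma add_left: "u \<in> D \<Longrightarrow> v \<in> D \<Longrightarrow> w \<in> D \<Longrightarrow> E (\<lambda>x. u x + v x) w = E u w + E v w"
  using symmetric unfolding symmetric_form_def by blast

lemma cmult_left: "u \<in> D \<Longrightarrow> w \<in> D \<Longrightarrow> E (\<lambda>x. c * u x) w = c * E u w"
  using symmetric unfolding symmetric_form_def by blast

lemma nonneg: "u \<in> D \<Longrightarrow> 0 \<le> E u u"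
  using symmetric unfolding symmetric_form_def by blast

lemma add_right:
  assumes "u \<in> D" "v \<in> D" "w \<in> D"
  shows "E w (\<lambda>x. u x + v x) = E w u + E w v"
  using add_left[OF assms] commute[OF assms(3) add_in[OF assms(1,2)]]
    commute[OF assms(3,1)] commute[OF assms(3,2)] by simp

lemma cmult_right:
  assumes "u \<in> D" "w \<in> D"
  shows "E w (\<lambda>x. c * u x) = c * E w u"
  using cmult_left[OF assms] commute[OF assms(2) cmult_in[OF assms(1)]] commute[OF assms(2,1)]
  by simp

lemma diff_right: "u \<in> D \<Longrightarrow> v \<in> D \<Longrightarrow> w \<in> D \<Longrightarrow> E w (\<lambda>x. u x - v x) = E w u - E w v"
  using add_right[of u "\<lambda>x. -1 * v x" w] cmult_in[of v "-1"] cmult_right[of v w "-1"] by simp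

lemma eq_on_space_in:
  assumes u: "u \<in> D" and eq: "\<And>x. x \<in> space M \<Longrightarrow> u x = v x"
  shows "v \<in> D" and "w \<in> D \<Longrightarrow> E u w = E v w" and "w \<in> D \<Longrightarrow> E w u = E w v"
proof -
  have "v \<in> L2 M"
    using in_L2[OF u] eq measurable_cong[of M u v]
      Bochner_Integration.integrable_cong[of M M "\<lambda>x. (u x)^2" "\<lambda>x. (v x)^2"]
    by (simp add: L2_def)
  moreover have "AE x in M. u x = v x"
    using eq by (intro AE_I2)
  ultimately have v: "v \<in> D" and uv: "\<forall>w\<in>D. E u w = E v w"
    using AE_eq_in[OF u] by auto
  show "v \<in> D" by (fact v)
  show "w \<in> D \<Longrightarrow> E u w = E v w" using uv by blast
  show "w \<in> D \<Longrightarrow> E w u = E w v" using uv u v by (metis commute)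
qed

lemma quadratic_add:
  assumes "u \<in> D" "v \<in> D"
  shows "E (\<lambda>x. u x + v x) (\<lambda>x. u x + v x) = E u u + 2 * E u v + E v v"
  using add_left[OF assms add_in[OF assms]] add_right[OF assms assms(1)]
    add_right[OF assms assms(2)] commute[OF assms] by simp

lemma quadratic_cmult:
  assumes "u \<in> D"
  shows "E (\<lambda>x. c * u x) (\<lambda>x. c * u x) = c^2 * E u u"
  using cmult_left[OF assms cmult_in[OF assms]] cmult_right[OF assms assms]
  by (simp add: power2_eq_square)

lemma quadratic_add_cmult:
  assumes "u \<in> D" "v \<in> D"
  shows "E (\<lambda>x. u x + c * v x) (\<lambda>x. u x + c * v x) = E u u + 2 * c * E u v + c^2 * E v v"
  using quadratic_add[OF assms(1) cmult_in[OF assms(2)]] quadratic_cmult[OF assms(2)]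
    cmult_right[OF assms(2,1)] by simp

lemma quadratic_diff:
  "u \<in> D \<Longrightarrow> v \<in> D \<Longrightarrow> E (\<lambda>x. u x - v x) (\<lambda>x. u x - v x) = E u u - 2 * E u v + E v v"
  using quadratic_add_cmult[of u v "-1"] by simp

lemma abs_le_weighted:
  assumes u: "u \<in> D" and v: "v \<in> D" and "\<eta> > 0"
  shows "2 * \<bar>E u v\<bar> \<le> \<eta> * E u u + E v v / \<eta>"
proof -
  have "0 \<le> E (\<lambda>x. u x + c * v x) (\<lambda>x. u x + c * v x)" for c
    by (intro nonneg add_in cmult_in u v)
  then have "0 \<le> E u u + 2 * c * E u v + c^2 * E v v" for c
    by (simp only: quadratic_add_cmult[OF u v])
  from this[of "1 / \<eta>"] this[of "- 1 / \<eta>"] \<open>\<eta> > 0\<close> have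
    "0 \<le> \<eta> * E u u + 2 * E u v + E v v / \<eta>" "0 \<le> \<eta> * E u u - 2 * E u v + E v v / \<eta>"
    by (auto simp: field_simps power2_eq_square)
  then show ?thesis by linarith
qed

lemma abs_le_half_sum: "u \<in> D \<Longrightarrow> v \<in> D \<Longrightarrow> 2 * \<bar>E u v\<bar> \<le> E u u + E v v"
  using abs_le_weighted[of u v 1] by simp

lemma orthogonal_if_null:
  assumes w: "w \<in> D" and z: "z \<in> D" "E z z = 0"
  shows "E w z = 0"
proof -
  have "\<bar>E w z\<bar> \<le> e" if "e > 0" for e
  proof -
    define \<eta> where "\<eta> = e / (E w w + 1)"
    have "\<eta> > 0" "\<eta> * E w w \<le> e"
      using that nonneg[OF w] by (auto simp: \<eta>_def field_simps)
    with abs_le_weighted[OF w z(1), of \<eta>] z(2) that show ?thesis by simp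
  qed
  then show ?thesis
    by (metis abs_le_zero_iff field_le_epsilon add_0)
qed

lemma parallelogram:
  assumes u: "u \<in> D" and v: "v \<in> D"
  shows "E (\<lambda>x. u x - v x) (\<lambda>x. u x - v x)
    = 2 * E u u + 2 * E v v - 4 * E (\<lambda>x. 1/2 * u x + 1/2 * v x) (\<lambda>x. 1/2 * u x + 1/2 * v x)"
proof -
  have "(\<lambda>x. 1/2 * u x + 1/2 * v x) = (\<lambda>x. 1/2 * (u x + v x))"
    by (simp add: field_simps)
  then have "E (\<lambda>x. 1/2 * u x + 1/2 * v x) (\<lambda>x. 1/2 * u x + 1/2 * v x)
      = 1/4 * (E u u + 2 * E u v + E v v)"
    using quadratic_cmult[OF add_in[OF u v], of "1/2"] quadratic_add[OF u v]
    by (simp add: power2_eq_square)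
  then show ?thesis by (simp add: quadratic_diff[OF u v])
qed

lemma energy_step_against:
  assumes g: "g \<in> D" and h: "h \<in> D" "E h h \<le> C" and t: "0 < t" "t * C \<le> c"
    and gh: "c \<le> \<bar>E g h\<bar>"
  obtains s where "s^2 = t^2" and "E (\<lambda>x. g x + s * h x) (\<lambda>x. g x + s * h x) \<le> E g g - t * c"
proof -
  define \<sigma> where "\<sigma> = (if 0 \<le> E g h then 1 else -1 :: real)"
  have \<sigma>: "\<sigma> * E g h = \<bar>E g h\<bar>" "\<sigma>^2 = 1"
    by (auto simp: \<sigma>_def)
  have "E (\<lambda>x. g x + (- t * \<sigma>) * h x) (\<lambda>x. g x + (- t * \<sigma>) * h x)
      = E g g - 2 * t * \<bar>E g h\<bar> + t^2 * E h h"
    unfolding quadratic_add_cmult[OF g h(1)] using \<sigma> by (simp add: power_mult_distrib algebra_simps)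
  also have "\<dots> \<le> E g g - 2 * t * c + t * (t * C)"
    using gh h(2) t by (intro add_mono diff_mono mult_left_mono) (auto simp: power2_eq_square)
  also have "\<dots> \<le> E g g - t * c"
    using t mult_left_mono[OF t(2), of t] by linarith
  finally show thesis
    using that[of "- t * \<sigma>"] \<sigma>(2) by (simp add: power_mult_distrib)
qed

lemma energy_tendsto:
  assumes u: "u \<in> D" and h: "\<And>n. h n \<in> D"
    and lim: "(\<lambda>n. E (\<lambda>x. h n x - u x) (\<lambda>x. h n x - u x)) \<longlonglongrightarrow> 0"
  shows "(\<lambda>n. E (h n) (h n)) \<longlonglongrightarrow> E u u"
proof (rule LIMSEQ_I)
  fix e :: real assume e: "e > 0"
  define \<eta> where "\<eta> = e / (2 * (E u u + 1))"
  have \<eta>: "\<eta> > 0" "\<eta> * E u u < e / 2"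
    using e nonneg[OF u] by (auto simp: \<eta>_def field_simps)
  obtain N where N: "\<And>n. n \<ge> N \<Longrightarrow> E (\<lambda>x. h n x - u x) (\<lambda>x. h n x - u x) < e / 2 / (1 + 1 / \<eta>)"
  proof -
    have "e / 2 / (1 + 1 / \<eta>) > 0" using e \<eta>(1) by (simp add: add_pos_pos)
    from LIMSEQ_D[OF lim this] obtain N
      where "\<forall>n\<ge>N. \<bar>E (\<lambda>x. h n x - u x) (\<lambda>x. h n x - u x)\<bar> < e / 2 / (1 + 1 / \<eta>)"
      by auto
    then show ?thesis by (intro that[of N]) (auto simp: abs_less_iff)
  qed
  have "\<bar>E (h n) (h n) - E u u\<bar> < e" if "n \<ge> N" for n
  proof -
    let ?d = "\<lambda>x. h n x - u x"
    have d: "?d \<in> D" using h u by (rule diff_in)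
    have "E (h n) (h n) = E u u + 2 * E u ?d + E ?d ?d"
      using quadratic_add[OF u d] by simp
    moreover have "2 * \<bar>E u ?d\<bar> \<le> \<eta> * E u u + E ?d ?d / \<eta>"
      by (rule abs_le_weighted[OF u d \<eta>(1)])
    moreover have "E ?d ?d + E ?d ?d / \<eta> < e / 2"
      using N[OF that] \<eta>(1) by (simp add: field_simps)
    ultimately show ?thesis using \<eta>(2) nonneg[OF d] by linarith
  qed
  then show "\<exists>N. \<forall>n\<ge>N. norm (E (h n) (h n) - E u u) < e" by auto
qed

end

section \<open>Closed forms: lower semicontinuity and weak continuity\<close>

inductive_set tail_convex_combs :: "(nat \<Rightarrow> 'a \<Rightarrow> real) \<Rightarrow> nat \<Rightarrow> ('a \<Rightarrow> real) set"
  for F :: "nat \<Rightarrow> 'a \<Rightarrow> real" and N :: nat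
where
  tail: "n \<ge> N \<Longrightarrow> F n \<in> tail_convex_combs F N"
| combine: "g \<in> tail_convex_combs F N \<Longrightarrow> h \<in> tail_convex_combs F N \<Longrightarrow> 0 \<le> t \<Longrightarrow> t \<le> 1
    \<Longrightarrow> (\<lambda>x. t * g x + (1 - t) * h x) \<in> tail_convex_combs F N"

lemma tail_convex_combs_antimono:
  assumes "N \<le> K" "g \<in> tail_convex_combs F K"
  shows "g \<in> tail_convex_combs F N"
  using assms(2) by induction (use assms(1) in \<open>auto intro: tail_convex_combs.intros\<close>)

lemma tail_convex_combs_midpoint:
  "g \<in> tail_convex_combs F N \<Longrightarrow> h \<in> tail_convex_combs F N
    \<Longrightarrow> (\<lambda>x. 1/2 * g x + 1/2 * h x) \<in> tail_convex_combs F N"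
  using combine[of g F N h "1/2"] by (simp add: field_simps)

lemma tail_convex_combs_L2_close:
  assumes f: "f \<in> L2 M" and F: "\<And>n. n \<ge> N \<Longrightarrow> F n \<in> L2 M \<and> L2_sqdist M (F n) f \<le> e"
    and "g \<in> tail_convex_combs F N"
  shows "g \<in> L2 M \<and> L2_sqdist M g f \<le> e"
  using assms(3)
proof induction
  case (tail n)
  then show ?case using F by blast
next
  case (combine g h t)
  have gf: "(\<lambda>x. g x - f x) \<in> L2 M" and hf: "(\<lambda>x. h x - f x) \<in> L2 M"
    using combine.IH f by (auto intro: L2_diff)
  have "L2_sqdist M (\<lambda>x. t * g x + (1 - t) * h x) f
      \<le> (\<integral>x. t * (g x - f x)^2 + (1 - t) * (h x - f x)^2 \<partial>M)"
  proof (rule ip_self_le_integral)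
    show "(\<lambda>x. t * g x + (1 - t) * h x - f x) \<in> borel_measurable M"
      using combine.IH f by (auto simp: L2_def)
    show "integrable M (\<lambda>x. t * (g x - f x)^2 + (1 - t) * (h x - f x)^2)"
      using gf hf by (auto simp: L2_def)
    show "(t * g x + (1 - t) * h x - f x)^2 \<le> t * (g x - f x)^2 + (1 - t) * (h x - f x)^2" for x
    proof -
      have "t * (g x - f x)^2 + (1 - t) * (h x - f x)^2 - (t * g x + (1 - t) * h x - f x)^2
          = t * (1 - t) * (g x - h x)^2"
        by (simp add: power2_eq_square algebra_simps)
      moreover have "0 \<le> t * (1 - t) * (g x - h x)^2" using combine.hyps by simp
      ultimately show ?thesis by linarith
    qed
  qed
  also have "\<dots> = t * L2_sqdist M g f + (1 - t) * L2_sqdist M h f"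
    using gf hf by (simp add: ip_self_eq_integral L2_def)
  also have "\<dots> \<le> t * e + (1 - t) * e"
    using combine by (intro add_mono mult_left_mono) auto
  also have "\<dots> = e" by (simp add: algebra_simps)
  finally show ?case
    using combine.IH by (auto intro: L2_add L2_cmult)
qed

lemma tail_convex_combs_L2_tendsto:
  assumes f: "f \<in> L2 M" and F: "\<And>n. F n \<in> L2 M" and lim: "(\<lambda>n. L2_sqdist M (F n) f) \<longlonglongrightarrow> 0"
    and G: "\<And>N. G N \<in> tail_convex_combs F N"
  shows "(\<lambda>N. L2_sqdist M (G N) f) \<longlonglongrightarrow> 0"
proof (rule LIMSEQ_I)
  fix e :: real assume "e > 0"
  with order_tendstoD(2)[OF lim, of "e/2"] obtain N0
    where N0: "\<And>n. n \<ge> N0 \<Longrightarrow> L2_sqdist M (F n) f < e/2"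
    by (auto simp: eventually_sequentially)
  have "L2_sqdist M (G N) f \<le> e/2" if "N \<ge> N0" for N
    using tail_convex_combs_L2_close[OF f _ tail_convex_combs_antimono[OF that G]] F N0
    by (meson less_imp_le)
  with \<open>e > 0\<close> have "norm (L2_sqdist M (G N) f - 0) < e" if "N \<ge> N0" for N
    using that ip_self_nonneg[of M "\<lambda>x. G N x - f x"] by fastforce
  then show "\<exists>N0. \<forall>N\<ge>N0. norm (L2_sqdist M (G N) f - 0) < e" by blast
qed

context sym_form
begin

lemma tail_convex_combs_in:
  assumes "\<And>n. F n \<in> D" "g \<in> tail_convex_combs F N"
  shows "g \<in> D"
  using assms(2) by induction (auto intro: add_in cmult_in assms(1))

text \<open>As for the element of minimal norm in a closed convex set of a Hilbert space: near
  minimisers of the energy over the convex hulls of the tails form a Cauchy sequence, by the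
  parallelogram law.\<close>

lemma energy_Cauchy_if_near_inf:
  assumes F: "\<And>n. F n \<in> D" and G: "\<And>N. G N \<in> tail_convex_combs F N"
    and r_le: "\<And>N g. g \<in> tail_convex_combs F N \<Longrightarrow> r N \<le> E g g"
    and R: "r \<longlonglongrightarrow> R" "\<And>N. r N \<le> R"
    and G_le: "\<And>N. E (G N) (G N) < r N + 1 / (real N + 1)" and "e > 0"
  shows "\<exists>N. \<forall>n\<ge>N. \<forall>k\<ge>N. E (\<lambda>x. G n x - G k x) (\<lambda>x. G n x - G k x) < e"
proof -
  have in_D: "g \<in> tail_convex_combs F N \<Longrightarrow> g \<in> D" for g N
    using tail_convex_combs_in[OF F] .
  obtain N1 where N1: "\<And>n. n \<ge> N1 \<Longrightarrow> R - e / 8 < r n"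
    using order_tendstoD(1)[OF R(1), of "R - e/8"] \<open>e > 0\<close> by (auto simp: eventually_sequentially)
  obtain N2 :: nat where N2: "1 / (e / 8) < real N2"
    using reals_Archimedean2 by blast
  have small: "1 / (real n + 1) < e / 8" if "n \<ge> N2" for n
  proof -
    have "1 / (e / 8) < real n + 1" using N2 that by linarith
    with \<open>e > 0\<close> show ?thesis by (simp add: field_simps)
  qed
  have "E (\<lambda>x. G n x - G k x) (\<lambda>x. G n x - G k x) < e" if "n \<ge> max N1 N2" "k \<ge> max N1 N2" for n k
  proof -
    let ?N = "max N1 N2"
    have "r ?N \<le> E (\<lambda>x. 1/2 * G n x + 1/2 * G k x) (\<lambda>x. 1/2 * G n x + 1/2 * G k x)"
      using that by (intro r_le tail_convex_combs_midpoint tail_convex_combs_antimono[OF _ G]) auto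
    moreover have "E (G m) (G m) < R + e/8" if "m \<ge> ?N" for m
      using G_le[of m] R(2)[of m] small[of m] that by simp
    then have "E (G n) (G n) < R + e/8" "E (G k) (G k) < R + e/8"
      using that by simp_all
    moreover have "R - e/8 < r ?N" using N1 by simp
    ultimately show ?thesis
      using parallelogram[OF in_D[OF G] in_D[OF G], of n k] by linarith
  qed
  then show ?thesis by blast
qed

lemma energy_Cauchy_tail_convex_combs:
  assumes F: "\<And>n. F n \<in> D" and C: "\<And>n. E (F n) (F n) \<le> C"
  obtains G where "\<And>N. G N \<in> tail_convex_combs F N" "\<And>N. E (G N) (G N) \<le> C + 1 / (real N + 1)"
    and "\<And>e. e > 0 \<Longrightarrow> \<exists>N. \<forall>n\<ge>N. \<forall>k\<ge>N. E (\<lambda>x. G n x - G k x) (\<lambda>x. G n x - G k x) < e"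
proof -
  define r where "r N = Inf ((\<lambda>g. E g g) ` tail_convex_combs F N)" for N
  have in_D: "g \<in> tail_convex_combs F N \<Longrightarrow> g \<in> D" for g N
    using tail_convex_combs_in[OF F] .
  have bdd: "bdd_below ((\<lambda>g. E g g) ` tail_convex_combs F N)" for N
    by (rule bdd_belowI[of _ 0]) (auto intro: nonneg in_D)
  have r_le: "r N \<le> E g g" if "g \<in> tail_convex_combs F N" for g N
    unfolding r_def using that bdd by (intro cInf_lower) auto
  have r_le_C: "r N \<le> C" for N
    using r_le[OF tail[of N N F]] C[of N] by simp
  have "incseq r"
  proof (rule incseq_SucI)
    show "r N \<le> r (Suc N)" for N
      unfolding r_def using tail[of "Suc N" "Suc N" F] bdd
        tail_convex_combs_antimono[of N "Suc N" _ F]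
      by (intro cInf_superset_mono) auto
  qed
  then obtain R where R: "r \<longlonglongrightarrow> R" "\<And>N. r N \<le> R"
    using incseq_convergent[of r C] r_le_C by blast
  have "\<exists>g. g \<in> tail_convex_combs F N \<and> E g g < r N + 1 / (real N + 1)" for N
    using cInf_lessD[of "(\<lambda>g. E g g) ` tail_convex_combs F N" "r N + 1 / (real N + 1)"] tail[of N N F]
    by (auto simp: r_def)
  then obtain G where G: "\<And>N. G N \<in> tail_convex_combs F N"
    and G_le: "\<And>N. E (G N) (G N) < r N + 1 / (real N + 1)"
    by metis
  have "\<exists>N. \<forall>n\<ge>N. \<forall>k\<ge>N. E (\<lambda>x. G n x - G k x) (\<lambda>x. G n x - G k x) < e" if "e > 0" for e
    using energy_Cauchy_if_near_inf[where F = F and G = G and r = r and R = R and e = e,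
        OF F G r_le R G_le that] .
  moreover have "E (G N) (G N) \<le> C + 1 / (real N + 1)" for N
    using G_le[of N] r_le_C[of N] by linarith
  ultimately show thesis using that G by blast
qed

lemma E1_Cauchy_if_energy_Cauchy:
  assumes G: "\<And>n. G n \<in> D"
    and Cauchy: "\<And>e. e > 0 \<Longrightarrow> \<exists>N. \<forall>n\<ge>N. \<forall>k\<ge>N. E (\<lambda>x. G n x - G k x) (\<lambda>x. G n x - G k x) < e"
    and f: "f \<in> L2 M" and lim: "(\<lambda>n. L2_sqdist M (G n) f) \<longlonglongrightarrow> 0" and "e > 0"
  shows "\<exists>N. \<forall>n\<ge>N. \<forall>k\<ge>N. E1 M E (\<lambda>x. G n x - G k x) < e"
proof -
  obtain N1 where N1: "\<forall>n\<ge>N1. \<forall>k\<ge>N1. E (\<lambda>x. G n x - G k x) (\<lambda>x. G n x - G k x) < e/2"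
    using Cauchy[of "e/2"] \<open>e > 0\<close> by auto
  obtain N2 where N2: "\<And>n. n \<ge> N2 \<Longrightarrow> L2_sqdist M (G n) f < e/8"
    using order_tendstoD(2)[OF lim, of "e/8"] \<open>e > 0\<close> by (auto simp: eventually_sequentially)
  have L2_small: "L2_sqdist M (G n) (G k) < e/2" if "n \<ge> N2" "k \<ge> N2" for n k
    using L2_sqdist_triangle[OF in_L2[OF G] f in_L2[OF G], of n k] N2[OF that(1)] N2[OF that(2)]
      L2_sqdist_commute[of M f "G k"] by linarith
  have "E1 M E (\<lambda>x. G n x - G k x) < e" if "n \<ge> max N1 N2" "k \<ge> max N1 N2" for n k
  proof -
    have "E (\<lambda>x. G n x - G k x) (\<lambda>x. G n x - G k x) < e/2"
      using N1 that by simp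
    with L2_small[of n k] that show ?thesis
      unfolding E1_def by simp
  qed
  then show ?thesis by blast
qed

end

locale closed_sym_form = sym_form +
  assumes closed: "closed_form M D E"
begin

lemma form_tendsto_L2_limit:
  assumes G: "\<And>n. G n \<in> D"
    and Cauchy: "\<And>e. e > 0 \<Longrightarrow> \<exists>N. \<forall>n\<ge>N. \<forall>k\<ge>N. E (\<lambda>x. G n x - G k x) (\<lambda>x. G n x - G k x) < e"
    and f: "f \<in> L2 M" and lim: "(\<lambda>n. L2_sqdist M (G n) f) \<longlonglongrightarrow> 0"
  shows "f \<in> D" and "(\<lambda>n. E (\<lambda>x. G n x - f x) (\<lambda>x. G n x - f x)) \<longlonglongrightarrow> 0"
proof -
  have "\<exists>N. \<forall>n\<ge>N. \<forall>k\<ge>N. E1 M E (\<lambda>x. G n x - G k x) < e" if "e > 0" for e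
    using E1_Cauchy_if_energy_Cauchy[where G = G and f = f and e = e, OF G Cauchy f lim that] .
  then obtain u where u: "u \<in> D" and u_lim: "(\<lambda>n. E1 M E (\<lambda>x. G n x - u x)) \<longlonglongrightarrow> 0"
    using closed G unfolding closed_form_def by blast
  have E1_ge: "E (\<lambda>x. G n x - u x) (\<lambda>x. G n x - u x) \<le> E1 M E (\<lambda>x. G n x - u x)"
    "L2_sqdist M (G n) u \<le> E1 M E (\<lambda>x. G n x - u x)" for n
    using ip_self_nonneg nonneg[OF diff_in[OF G u]] by (auto simp: E1_def)
  have lim_Gu: "(\<lambda>n. L2_sqdist M (G n) u) \<longlonglongrightarrow> 0"
    by (rule tendsto_sandwich[OF _ _ tendsto_const u_lim]) (auto simp: E1_ge ip_self_nonneg)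
  have "(\<lambda>n. 2 * L2_sqdist M u (G n) + 2 * L2_sqdist M (G n) f) \<longlonglongrightarrow> 2 * 0 + 2 * 0"
    using lim lim_Gu by (intro tendsto_intros) (simp add: L2_sqdist_commute)
  then have "(\<lambda>n. 2 * L2_sqdist M u (G n) + 2 * L2_sqdist M (G n) f) \<longlonglongrightarrow> 0"
    by simp
  then have "L2_sqdist M u f \<le> 0"
    by (rule LIMSEQ_le_const) (use L2_sqdist_triangle[OF in_L2[OF u] in_L2[OF G] f] in blast)
  then have "L2_sqdist M u f = 0"
    using ip_self_nonneg[of M "\<lambda>x. u x - f x"] by linarith
  then have "AE x in M. u x - f x = 0"
    by (rule AE_eq_0_if_ip_self_eq_0[OF L2_diff[OF in_L2[OF u] f]])
  then have uf: "AE x in M. G n x - u x = G n x - f x" for n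
    by auto
  show f_in: "f \<in> D"
    using AE_eq_in[OF u f] \<open>AE x in M. u x - f x = 0\<close> by auto
  have "E (\<lambda>x. G n x - f x) (\<lambda>x. G n x - f x) = E (\<lambda>x. G n x - u x) (\<lambda>x. G n x - u x)" for n
  proof -
    have Gu: "(\<lambda>x. G n x - u x) \<in> D" and Gf: "(\<lambda>x. G n x - f x) \<in> D"
      using G u f_in by (auto intro: diff_in)
    from AE_eq_in[OF Gu in_L2[OF Gf] uf] Gu Gf show ?thesis
      by (metis commute)
  qed
  then show "(\<lambda>n. E (\<lambda>x. G n x - f x) (\<lambda>x. G n x - f x)) \<longlonglongrightarrow> 0"
    using tendsto_sandwich[OF _ _ tendsto_const u_lim] E1_ge nonneg[OF diff_in[OF G u]] by auto
qed

lemma energy_le_of_L2_limit: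
  assumes F: "\<And>n. F n \<in> D" and C: "\<And>n. E (F n) (F n) \<le> C"
    and f: "f \<in> L2 M" and lim: "(\<lambda>n. L2_sqdist M (F n) f) \<longlonglongrightarrow> 0"
  shows "f \<in> D" and "E f f \<le> C"
proof -
  obtain G where G: "\<And>N. G N \<in> tail_convex_combs F N"
    and G_le: "\<And>N. E (G N) (G N) \<le> C + 1 / (real N + 1)"
    and Cauchy: "\<And>e. e > 0 \<Longrightarrow> \<exists>N. \<forall>n\<ge>N. \<forall>k\<ge>N. E (\<lambda>x. G n x - G k x) (\<lambda>x. G n x - G k x) < e"
    using energy_Cauchy_tail_convex_combs[of F C, OF F C] by blast
  have G_in: "G N \<in> D" for N
    using tail_convex_combs_in[OF F G] .
  have "(\<lambda>N. L2_sqdist M (G N) f) \<longlonglongrightarrow> 0"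
    using tail_convex_combs_L2_tendsto[OF f in_L2[OF F] lim G] .
  note G_lim = form_tendsto_L2_limit[OF G_in Cauchy f this]
  show f_in: "f \<in> D" using G_lim by blast
  from G_lim(2) have "(\<lambda>N. E (G N) (G N)) \<longlonglongrightarrow> E f f"
    by (rule energy_tendsto[OF f_in G_in])
  moreover have "(\<lambda>N. C + 1 / (real N + 1)) \<longlonglongrightarrow> C"
    using LIMSEQ_inverse_real_of_nat_add[of C] by (simp add: inverse_eq_divide add.commute)
  ultimately show "E f f \<le> C"
    by (rule LIMSEQ_le) (use G_le in blast)
qed

text \<open>If \<open>E g (h n)\<close> stayed away from 0, moving \<open>g\<close> a fixed small step against \<open>h n\<close> would
  lower its energy by a fixed amount while converging to \<open>g\<close> in \<open>L\<^sup>2\<close>, contradicting lower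
  semicontinuity.\<close>

lemma form_tendsto_0_if_L2_null:
  assumes h: "\<And>n. h n \<in> D" and C: "\<And>n. E (h n) (h n) \<le> C"
    and lim: "(\<lambda>n. ip M (h n) (h n)) \<longlonglongrightarrow> 0" and g: "g \<in> D"
  shows "(\<lambda>n. E g (h n)) \<longlonglongrightarrow> 0"
proof (rule ccontr)
  assume "\<not> (\<lambda>n. E g (h n)) \<longlonglongrightarrow> 0"
  then obtain c where c: "c > 0" and "\<forall>N. \<exists>n\<ge>N. c \<le> \<bar>E g (h n)\<bar>"
    unfolding LIMSEQ_def by (auto simp: not_less)
  then obtain \<sigma> where \<sigma>: "\<And>N. \<sigma> N \<ge> N" "\<And>N. c \<le> \<bar>E g (h (\<sigma> N))\<bar>"
    by metis
  have "0 \<le> C" using nonneg[OF h] C order_trans by blast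
  define t where "t = c / (C + 1)"
  have t: "t > 0" "t * C \<le> c"
    using c \<open>0 \<le> C\<close> by (auto simp: t_def field_simps)
  have "\<exists>s. s^2 = t^2 \<and> E (\<lambda>x. g x + s * h (\<sigma> N) x) (\<lambda>x. g x + s * h (\<sigma> N) x) \<le> E g g - t * c"
    for N using energy_step_against[OF g h[of "\<sigma> N"] C[of "\<sigma> N"] t \<sigma>(2)[of N]] by blast
  then obtain s where s: "\<And>N. (s N)^2 = t^2"
    and s_le: "\<And>N. E (\<lambda>x. g x + s N * h (\<sigma> N) x) (\<lambda>x. g x + s N * h (\<sigma> N) x) \<le> E g g - t * c"
    by metis
  define \<phi> where "\<phi> N = (\<lambda>x. g x + s N * h (\<sigma> N) x)" for N
  have \<phi>_in: "\<phi> N \<in> D" for N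
    unfolding \<phi>_def by (intro add_in cmult_in g h)
  have "E (\<phi> N) (\<phi> N) \<le> E g g - t * c" for N
    unfolding \<phi>_def by (rule s_le)
  moreover have "(\<lambda>N. L2_sqdist M (\<phi> N) g) \<longlonglongrightarrow> 0"
  proof -
    have "filterlim \<sigma> sequentially sequentially"
      using \<sigma>(1) by (intro filterlim_at_top_mono[OF filterlim_ident]) auto
    from filterlim_compose[OF lim this]
    have "(\<lambda>N. t^2 * ip M (h (\<sigma> N)) (h (\<sigma> N))) \<longlonglongrightarrow> t^2 * 0"
      by (intro tendsto_mult_left)
    moreover have "L2_sqdist M (\<phi> N) g = t^2 * ip M (h (\<sigma> N)) (h (\<sigma> N))" for N
    proof -
      have eq: "(\<lambda>x. \<phi> N x - g x) = (\<lambda>x. s N * h (\<sigma> N) x)"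
        by (simp add: \<phi>_def)
      have "L2_sqdist M (\<phi> N) g = ip M (\<lambda>x. s N * h (\<sigma> N) x) (\<lambda>x. s N * h (\<sigma> N) x)"
        by (rule arg_cong2[where f = "ip M", OF eq eq])
      also have "\<dots> = t^2 * ip M (h (\<sigma> N)) (h (\<sigma> N))"
        by (simp only: ip_self_cmult s)
      finally show ?thesis .
    qed
    ultimately show ?thesis by simp
  qed
  ultimately have "E g g \<le> E g g - t * c"
    using energy_le_of_L2_limit(2)[of \<phi> "E g g - t * c" g] \<phi>_in in_L2[OF g] by blast
  with mult_pos_pos[OF t(1) c] show False by linarith
qed

lemma form_tendsto_right:
  assumes h: "\<And>n. h n \<in> D" and C: "\<And>n. E (h n) (h n) \<le> C"
    and lim: "(\<lambda>n. L2_sqdist M (h n) k) \<longlonglongrightarrow> 0" and k: "k \<in> D" and g: "g \<in> D"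
  shows "(\<lambda>n. E g (h n)) \<longlonglongrightarrow> E g k"
proof -
  have hk: "(\<lambda>x. h n x - k x) \<in> D" for n
    using h k by (rule diff_in)
  have "E (\<lambda>x. h n x - k x) (\<lambda>x. h n x - k x) \<le> 2 * C + 2 * E k k" for n
    using quadratic_diff[OF h k, of n] abs_le_half_sum[OF h k, of n] C[of n] by linarith
  from form_tendsto_0_if_L2_null[of "\<lambda>n x. h n x - k x", OF hk this lim g]
  have "(\<lambda>n. E g (h n) - E g k) \<longlonglongrightarrow> 0"
    by (simp add: diff_right[OF h k g])
  from tendsto_add[OF this tendsto_const[of "E g k"]] show ?thesis
    by simp
qed

lemma energy_le_of_L2_limit_tendsto:
  assumes F: "\<And>n. F n \<in> D" and c: "\<And>n. E (F n) (F n) \<le> c n" "c \<longlonglongrightarrow> C"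
    and f: "f \<in> L2 M" and lim: "(\<lambda>n. L2_sqdist M (F n) f) \<longlonglongrightarrow> 0"
  shows "E f f \<le> C"
proof (rule field_le_epsilon)
  fix e :: real assume "e > 0"
  then obtain N where N: "\<And>n. n \<ge> N \<Longrightarrow> c n < C + e"
    using order_tendstoD(2)[OF c(2), of "C + e"] by (auto simp: eventually_sequentially)
  show "E f f \<le> C + e"
  proof (rule energy_le_of_L2_limit(2)[where F = "\<lambda>n. F (n + N)"])
    show "E (F (n + N)) (F (n + N)) \<le> C + e" for n
      using c(1)[of "n + N"] N[of "n + N"] by simp
  qed (use F f LIMSEQ_ignore_initial_segment[OF lim, of N] in auto)
qed

end

section \<open>Conservative Dirichlet forms\<close>

locale dirichlet = closed_sym_form +
  assumes markov: "markovian M D E" and conservative: "conservative_form M D E"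
begin

lemma one_in: "(\<lambda>x. 1) \<in> D" and one_left: "w \<in> D \<Longrightarrow> E (\<lambda>x. 1) w = 0"
  using conservative[unfolded conservative_form_def, rule_format, of 1]
  by (auto simp: resolvent_sol_def)

lemma const_in: "(\<lambda>x. c) \<in> D"
  using cmult_in[OF one_in, of c] by simp

lemma const_left: "w \<in> D \<Longrightarrow> E (\<lambda>x. c) w = 0"
  using cmult_left[OF one_in, of w c] one_left by simp

lemma const_right: "w \<in> D \<Longrightarrow> E w (\<lambda>x. c) = 0"
  using const_left commute[OF _ const_in] by metis

lemma add_const_in: "u \<in> D \<Longrightarrow> (\<lambda>x. c + u x) \<in> D"
  by (rule add_in[OF const_in])

lemma add_const_left: "u \<in> D \<Longrightarrow> w \<in> D \<Longrightarrow> E (\<lambda>x. c + u x) w = E u w"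
  using add_left[OF const_in, of u w c] const_left by simp

lemma quadratic_add_const: "u \<in> D \<Longrightarrow> E (\<lambda>x. c + u x) (\<lambda>x. c + u x) = E u u"
  using add_const_left[OF _ add_const_in] add_right[OF const_in _ _, of u u c] const_right
  by (simp add: add_const_in)

lemma unit_contraction:
  "u \<in> D \<Longrightarrow> (\<lambda>x. min 1 (max 0 (u x))) \<in> D
     \<and> E (\<lambda>x. min 1 (max 0 (u x))) (\<lambda>x. min 1 (max 0 (u x))) \<le> E u u"
  using markov unfolding markovian_def by blast

text \<open>Clamping to \<open>[a, b]\<close> is an affine rescaling of the unit contraction.\<close>

lemma clamp:
  assumes "a < b" and u: "u \<in> D"
  shows "(\<lambda>x. min b (max a (u x))) \<in> D"
    and "E (\<lambda>x. min b (max a (u x))) (\<lambda>x. min b (max a (u x))) \<le> E u u"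
proof -
  define v where "v = (\<lambda>x. 1 / (b - a) * (u x - a))"
  define T where "T = (\<lambda>x. min 1 (max 0 (v x)))"
  have v: "v \<in> D" unfolding v_def by (intro cmult_in diff_in u const_in)
  have T: "T \<in> D" "E T T \<le> E v v"
    using unit_contraction[OF v] by (auto simp: T_def)
  have clamp_eq: "(\<lambda>x. min b (max a (u x))) = (\<lambda>x. a + (b - a) * T x)"
  proof
    fix x
    consider "u x \<le> a" | "a < u x" "u x < b" | "b \<le> u x" by linarith
    then show "min b (max a (u x)) = a + (b - a) * T x"
      using \<open>a < b\<close> by cases (auto simp: T_def v_def field_simps min_def max_def)
  qed
  show "(\<lambda>x. min b (max a (u x))) \<in> D"
    unfolding clamp_eq by (intro add_const_in cmult_in T(1))
  have "E v v = (1 / (b - a))^2 * E u u"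
    unfolding v_def quadratic_cmult[OF diff_in[OF u const_in]]
    using quadratic_add_const[OF u, of "- a"] by simp
  then have "(b - a)^2 * E T T \<le> E u u"
    using T(2) \<open>a < b\<close> mult_left_mono[OF T(2), of "(b - a)^2"] by (simp add: power_divide)
  then show "E (\<lambda>x. min b (max a (u x))) (\<lambda>x. min b (max a (u x))) \<le> E u u"
    unfolding clamp_eq quadratic_add_const[OF cmult_in[OF T(1)]] quadratic_cmult[OF T(1)] .
qed

lemma pos_part_in:
  assumes u: "u \<in> D" and bdd: "\<And>x. x \<in> space M \<Longrightarrow> u x \<le> B"
  shows "(\<lambda>x. max 0 (u x)) \<in> D"
proof (rule eq_on_space_in(1)[OF clamp(1)[of 0 "max B 0 + 1", OF _ u]])
  show "min (max B 0 + 1) (max 0 (u x)) = max 0 (u x)" if "x \<in> space M" for x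
    using bdd[OF that] by simp
qed simp

end

section \<open>Local Dirichlet forms on a compact space\<close>

lemma compact_fn_support: "compact (space M) \<Longrightarrow> compact (fn_support M u)"
proof -
  assume "compact (space M)"
  moreover have "closed (- \<Union>{U. open U \<and> (AE x in M. x \<in> U \<longrightarrow> u x = 0)})"
    by (intro closed_Compl open_Union) auto
  moreover have "fn_support M u = space M \<inter> - \<Union>{U. open U \<and> (AE x in M. x \<in> U \<longrightarrow> u x = 0)}"
    by (auto simp: fn_support_def)
  ultimately show ?thesis by (simp add: compact_Int_closed)
qed

lemma fn_support_subset:
  assumes "open U" "\<And>x. x \<in> space M \<Longrightarrow> x \<in> U \<Longrightarrow> u x = 0"
  shows "fn_support M u \<subseteq> space M - U"
proof -
  have "AE x in M. x \<in> U \<longrightarrow> u x = 0"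
    using assms(2) by (intro AE_I2) auto
  with assms(1) show ?thesis by (auto simp: fn_support_def)
qed

lemma fn_support_disjoint_by_levels:
  fixes v :: "'a::topological_space \<Rightarrow> real"
  assumes v: "continuous_on (space M) v" and "a < b"
    and f: "\<And>x. x \<in> space M \<Longrightarrow> a < v x \<Longrightarrow> f x = 0"
    and g: "\<And>x. x \<in> space M \<Longrightarrow> v x < b \<Longrightarrow> g x = 0"
  shows "fn_support M f \<inter> fn_support M g = {}"
proof -
  obtain U where U: "open U" "U \<inter> space M = v -` {a<..} \<inter> space M"
    using v unfolding continuous_on_open_invariant by (meson open_greaterThan)
  obtain V where V: "open V" "V \<inter> space M = v -` {..<b} \<inter> space M"
    using v unfolding continuous_on_open_invariant by (meson open_lessThan)
  have "fn_support M f \<subseteq> space M - U"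
    using U by (intro fn_support_subset f) auto
  moreover have "fn_support M g \<subseteq> space M - V"
    using V by (intro fn_support_subset g) auto
  moreover have "space M \<subseteq> U \<union> V"
    using U(2) V(2) \<open>a < b\<close> by force
  ultimately show ?thesis by blast
qed

lemma bounded_if_continuous_on_compact:
  fixes v :: "'a::topological_space \<Rightarrow> real"
  assumes "compact S" "continuous_on S v"
  obtains B where "\<And>x. x \<in> S \<Longrightarrow> \<bar>v x\<bar> \<le> B"
  using compact_imp_bounded[OF compact_continuous_image[OF assms(2,1)]]
  unfolding bounded_real by (metis image_eqI that)

locale local_dirichlet = dirichlet M D E for M :: "'a::topological_space measure" and D E +
  assumes local: "local_form M D E"
    and compact_space: "compact (space M)" and finite: "finite_measure M"
begin

lemma orthogonal_by_levels:
  assumes "f \<in> D" "g \<in> D" "continuous_on (space M) v" "a < (b::real)"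
    and "\<And>x. x \<in> space M \<Longrightarrow> a < v x \<Longrightarrow> f x = 0"
    and "\<And>x. x \<in> space M \<Longrightarrow> v x < b \<Longrightarrow> g x = 0"
  shows "E f g = 0"
  using local assms(1,2) compact_fn_support[OF compact_space]
    fn_support_disjoint_by_levels[where M = M and v = v and a = a and b = b and f = f and g = g,
      OF assms(3-)]
  unfolding local_form_def by blast

text \<open>Up to an arbitrarily small clamp, the remainder \<open>v - T v\<close> splits into a part supported where
  \<open>v > 1\<close> (on which \<open>T v = 1\<close>) and a part supported where \<open>v < 0\<close> (on which \<open>T v = 0\<close>).\<close>

lemma unit_contraction_remainder_eq_clamp:
  assumes v: "v \<in> D" "continuous_on (space M) v" and \<epsilon>: "0 < \<epsilon>" "\<epsilon> < 1"
  defines "T \<equiv> \<lambda>x. min 1 (max 0 (v x))"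
  shows "E T (\<lambda>x. v x - T x) = E T (\<lambda>x. min \<epsilon> (max (- \<epsilon>) (v x - T x)))"
proof -
  obtain B where B: "\<And>x. x \<in> space M \<Longrightarrow> \<bar>v x\<bar> \<le> B"
    using bounded_if_continuous_on_compact[OF compact_space v(2)] by blast
  define P where "P = (\<lambda>x. max 0 (v x - (1 + \<epsilon>)))"
  define N where "N = (\<lambda>x. -1 * max 0 (- 1 * v x - \<epsilon>))"
  define k where "k = (\<lambda>x. min \<epsilon> (max (- \<epsilon>) (v x - T x)))"
  have T: "T \<in> D" using unit_contraction[OF v(1)] by (simp add: T_def)
  have P: "P \<in> D"
    unfolding P_def using B \<epsilon>
    by (intro pos_part_in[where B = B] diff_in v(1) const_in) (auto simp: abs_le_iff dest!: B)
  have N: "N \<in> D"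
    unfolding N_def using B \<epsilon>
    by (intro cmult_in pos_part_in[where B = B] diff_in v(1) const_in) (auto simp: abs_le_iff dest!: B)
  have k: "k \<in> D"
    unfolding k_def using \<epsilon> by (intro clamp(1) diff_in v(1) T) auto
  have split: "(\<lambda>x. v x - T x) = (\<lambda>x. P x + (N x + k x))"
    using \<epsilon> by (auto simp: T_def P_def N_def k_def min_def max_def)
  have "E (\<lambda>x. -1 + T x) P = 0"
    by (rule orthogonal_by_levels[OF add_const_in[OF T] P v(2), of 1 "1 + \<epsilon>"])
       (use \<epsilon> in \<open>auto simp: T_def P_def\<close>)
  then have TP: "E T P = 0"
    using add_const_left[OF T P, of "-1"] by simp
  have "E N T = 0"
    by (rule orthogonal_by_levels[OF N T v(2), of "- \<epsilon>" 0]) (use \<epsilon> in \<open>auto simp: T_def N_def\<close>)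
  then have TN: "E T N = 0"
    using commute[OF N T] by simp
  have "E T (\<lambda>x. P x + (N x + k x)) = E T P + (E T N + E T k)"
    using add_right[OF P add_in[OF N k] T] add_right[OF N k T] by simp
  then show ?thesis
    unfolding split using TP TN by (simp add: k_def)
qed

text \<open>By the previous lemma \<open>E (T v) (v - T v)\<close> equals \<open>E (T v) k\<^sub>\<epsilon>\<close> for clamps \<open>\<bar>k\<^sub>\<epsilon>\<bar> \<le> \<epsilon>\<close>
  of bounded energy, which tend to 0 in \<open>L\<^sup>2\<close>; weak continuity gives 0.\<close>

lemma unit_contraction_orthogonal:
  assumes v: "v \<in> D" "continuous_on (space M) v"
  defines "T \<equiv> \<lambda>x. min 1 (max 0 (v x))"
  shows "E T (\<lambda>x. v x - T x) = 0"
proof -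
  define w where "w = (\<lambda>x. v x - T x)"
  define k where "k n = (\<lambda>x. min (1 / (real n + 2)) (max (- (1 / (real n + 2))) (w x)))" for n
  have T: "T \<in> D" using unit_contraction[OF v(1)] by (simp add: T_def)
  have w: "w \<in> D" unfolding w_def by (intro diff_in v(1) T)
  have k: "k n \<in> D" "E (k n) (k n) \<le> E w w" for n
    using clamp[OF _ w, of "- (1 / (real n + 2))" "1 / (real n + 2)"] by (simp_all add: k_def)
  have "\<bar>min c (max (- c) y)\<bar> \<le> c" if "0 \<le> c" for c y :: real
    using that by linarith
  then have bound: "ip M (k n) (k n) \<le> (1 / (real n + 2))^2 * measure M (space M)" for n
    using finite in_L2[OF k(1)] by (intro ip_self_le_bound) (auto simp: L2_def k_def)
  have lim_bound: "(\<lambda>n. (1 / (real n + 2))^2 * measure M (space M)) \<longlonglongrightarrow> 0"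
    by real_asymp
  have "(\<lambda>n. ip M (k n) (k n)) \<longlonglongrightarrow> 0"
    by (rule tendsto_sandwich[OF _ _ tendsto_const lim_bound])
      (auto intro: always_eventually ip_self_nonneg bound)
  then have "(\<lambda>n. L2_sqdist M (k n) (\<lambda>x. 0)) \<longlonglongrightarrow> 0"
    by simp
  then have "(\<lambda>n. E T (k n)) \<longlonglongrightarrow> E T (\<lambda>x. 0)"
    using form_tendsto_right[of k, OF k(1) k(2) _ zero_in T] by blast
  moreover have "E T (k n) = E T w" for n
    using unit_contraction_remainder_eq_clamp[OF v, of "1 / (real n + 2)"]
    by (simp add: k_def w_def T_def)
  ultimately have "(\<lambda>n. E T w) \<longlonglongrightarrow> 0"
    using const_right[OF T, of 0] by simp
  then show ?thesis
    by (simp add: LIMSEQ_const_iff w_def)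
qed

end

section \<open>Functions of zero energy and invariant sets\<close>

lemma linear_coeff_eq_0_if_nonneg:
  fixes a b :: real
  assumes nonneg: "\<And>t. 0 \<le> 2 * t * b + t^2 * a" and "0 \<le> a"
  shows "b = 0"
proof (rule ccontr)
  assume "b \<noteq> 0"
  define r where "r = 1 / (a + 1)"
  have r: "r > 0" "r * a < 1" using \<open>0 \<le> a\<close> by (auto simp: r_def field_simps)
  have "2 * (- b * r) * b + (- b * r)^2 * a = r * b^2 * (r * a - 2)"
    by (simp add: power2_eq_square algebra_simps)
  also have "\<dots> < 0"
    using r \<open>b \<noteq> 0\<close> by (intro mult_pos_neg) auto
  finally show False using nonneg[of "- b * r"] by simp
qed

locale null_indicator = dirichlet +
  fixes \<Omega> :: "'a set"
  assumes measurable: "\<Omega> \<in> sets M"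
    and indicator_in: "(\<lambda>x. indicator \<Omega> x) \<in> D"
    and null: "E (\<lambda>x. indicator \<Omega> x) (\<lambda>x. indicator \<Omega> x) = 0"
begin

lemma indicator_orthogonal: "w \<in> D \<Longrightarrow> E w (\<lambda>x. indicator \<Omega> x) = 0"
  using orthogonal_if_null indicator_in null by blast

lemma quadratic_add_indicator: "u \<in> D \<Longrightarrow> E (\<lambda>x. u x + c * indicator \<Omega> x) (\<lambda>x. u x + c * indicator \<Omega> x) = E u u"
  using quadratic_add_cmult[OF _ indicator_in] indicator_orthogonal null by simp

text \<open>For bounded \<open>u\<close>, adding a large multiple of the indicator and clamping cuts \<open>u\<close> off on \<open>\<Omega>\<close>.\<close>

lemma bounded_split_in:
  assumes u: "u \<in> D" and bdd: "\<And>x. x \<in> space M \<Longrightarrow> \<bar>u x\<bar> \<le> c" and "c > 0"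
  shows "(\<lambda>x. (1 - indicator \<Omega> x) * u x) \<in> D" and "(\<lambda>x. indicator \<Omega> x * u x) \<in> D"
proof -
  have "(\<lambda>x. min c (max (- c) (u x + 2 * c * indicator \<Omega> x))) \<in> D"
    using \<open>c > 0\<close> by (intro clamp(1) add_in cmult_in u indicator_in) auto
  moreover have "min c (max (- c) (u x + 2 * c * indicator \<Omega> x))
      = c * indicator \<Omega> x + (1 - indicator \<Omega> x) * u x" if "x \<in> space M" for x
    using bdd[OF that] by (cases "x \<in> \<Omega>") (auto simp: abs_le_iff)
  ultimately have "(\<lambda>x. c * indicator \<Omega> x + (1 - indicator \<Omega> x) * u x) \<in> D"
    by (rule eq_on_space_in(1))
  from diff_in[OF this cmult_in[OF indicator_in, of c]]
  show outside: "(\<lambda>x. (1 - indicator \<Omega> x) * u x) \<in> D"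
    by simp
  from diff_in[OF u outside] show "(\<lambda>x. indicator \<Omega> x * u x) \<in> D"
    by (simp add: algebra_simps)
qed

text \<open>Clamping \<open>y + t x + K 1\<^sub>\<Omega>\<close> to \<open>[-c, c]\<close> gives \<open>y + c 1\<^sub>\<Omega>\<close>, so the Markov property yields
  \<open>E y y \<le> E (y + t x) (y + t x)\<close> for every \<open>t\<close>.\<close>

lemma bounded_split_orthogonal:
  assumes u: "u \<in> D" "\<And>x. x \<in> space M \<Longrightarrow> \<bar>u x\<bar> \<le> c"
    and v: "v \<in> D" "\<And>x. x \<in> space M \<Longrightarrow> \<bar>v x\<bar> \<le> c" and "c > 0"
  shows "E (\<lambda>x. indicator \<Omega> x * u x) (\<lambda>x. (1 - indicator \<Omega> x) * v x) = 0"
proof -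
  define x where "x = (\<lambda>z. indicator \<Omega> z * u z)"
  define y where "y = (\<lambda>z. (1 - indicator \<Omega> z) * v z)"
  have x_in: "x \<in> D" unfolding x_def using bounded_split_in[OF u \<open>c > 0\<close>] by blast
  have y_in: "y \<in> D" unfolding y_def using bounded_split_in[OF v \<open>c > 0\<close>] by blast
  have "0 \<le> 2 * t * E y x + t^2 * E x x" for t
  proof -
    define K where "K = 2 * c + \<bar>t\<bar> * c"
    define w where "w = (\<lambda>z. (y z + t * x z) + K * indicator \<Omega> z)"
    have yx: "(\<lambda>z. y z + t * x z) \<in> D" by (intro add_in cmult_in x_in y_in)
    have w: "w \<in> D" unfolding w_def by (intro add_in cmult_in yx indicator_in)
    have clamped: "(\<lambda>z. min c (max (- c) (w z))) \<in> D"
      using \<open>c > 0\<close> by (intro clamp(1) w) simp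
    have eq: "min c (max (- c) (w z)) = y z + c * indicator \<Omega> z" if "z \<in> space M" for z
    proof (cases "z \<in> \<Omega>")
      case True
      have "\<bar>t * u z\<bar> \<le> \<bar>t\<bar> * c" using u(2)[OF that] by (simp add: abs_mult mult_left_mono)
      with True \<open>c > 0\<close> show ?thesis by (auto simp: w_def x_def y_def K_def abs_le_iff)
    qed (use v(2)[OF that] in \<open>auto simp: w_def x_def y_def abs_le_iff\<close>)
    have shifted: "(\<lambda>z. y z + c * indicator \<Omega> z) \<in> D"
      by (rule eq_on_space_in(1)[OF clamped eq])
    have "E (\<lambda>z. y z + c * indicator \<Omega> z) (\<lambda>z. y z + c * indicator \<Omega> z)
        = E (\<lambda>z. min c (max (- c) (w z))) (\<lambda>z. min c (max (- c) (w z)))"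
      using eq_on_space_in(2)[OF clamped eq clamped] eq_on_space_in(3)[OF clamped eq shifted]
      by simp
    also have "\<dots> \<le> E w w"
      using \<open>c > 0\<close> by (intro clamp(2) w) simp
    finally have "E y y \<le> E (\<lambda>z. y z + t * x z) (\<lambda>z. y z + t * x z)"
      unfolding w_def by (simp add: quadratic_add_indicator y_in yx)
    then show ?thesis
      unfolding quadratic_add_cmult[OF y_in x_in] by simp
  qed
  then have "E y x = 0"
    using nonneg[OF x_in] by (rule linear_coeff_eq_0_if_nonneg)
  then show ?thesis
    using commute[OF x_in y_in] by (simp add: x_def y_def)
qed

lemma split_truncations:
  assumes u: "u \<in> D" and \<rho>: "\<rho> = (\<lambda>x. indicator \<Omega> x) \<or> \<rho> = (\<lambda>x. 1 - indicator \<Omega> x)"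
  defines "t \<equiv> \<lambda>n x. min (real n + 1) (max (- (real n + 1)) (u x))"
  shows "(\<lambda>x. \<rho> x * t n x) \<in> D"
    and "E (\<lambda>x. \<rho> x * t n x) (\<lambda>x. \<rho> x * t n x) \<le> E u u"
    and "(\<lambda>n. L2_sqdist M (\<lambda>x. \<rho> x * t n x) (\<lambda>x. \<rho> x * u x)) \<longlonglongrightarrow> 0"
proof -
  have t: "t n \<in> D" "E (t n) (t n) \<le> E u u"
    unfolding t_def by (intro clamp u; simp add: add_pos_nonneg)+
  have bdd: "\<bar>t n x\<bar> \<le> real n + 1" for x
    by (auto simp: t_def)
  have inside: "(\<lambda>x. indicator \<Omega> x * t n x) \<in> D"
    and outside: "(\<lambda>x. (1 - indicator \<Omega> x) * t n x) \<in> D"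
    using bounded_split_in[OF t(1) bdd] by auto
  have "t n = (\<lambda>x. indicator \<Omega> x * t n x + (1 - indicator \<Omega> x) * t n x)"
    by (simp add: algebra_simps)
  then have "E (t n) (t n) = E (\<lambda>x. indicator \<Omega> x * t n x) (\<lambda>x. indicator \<Omega> x * t n x)
      + E (\<lambda>x. (1 - indicator \<Omega> x) * t n x) (\<lambda>x. (1 - indicator \<Omega> x) * t n x)"
    using quadratic_add[OF inside outside] bounded_split_orthogonal[OF t(1) bdd t(1) bdd] by simp
  with t(2) nonneg[OF inside] nonneg[OF outside] \<rho>
  show "(\<lambda>x. \<rho> x * t n x) \<in> D" and "E (\<lambda>x. \<rho> x * t n x) (\<lambda>x. \<rho> x * t n x) \<le> E u u"
    using inside outside by auto
  have "\<rho> \<in> borel_measurable M" "\<rho> x \<in> {0, 1}" for x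
    using \<rho> measurable by (auto simp: indicator_def)
  from L2_weighted_truncation_tendsto[OF in_L2[OF u] this]
  show "(\<lambda>n. L2_sqdist M (\<lambda>x. \<rho> x * t n x) (\<lambda>x. \<rho> x * u x)) \<longlonglongrightarrow> 0"
    by (simp add: t_def)
qed

lemma split_in:
  assumes "u \<in> D" and "\<rho> = (\<lambda>x. indicator \<Omega> x) \<or> \<rho> = (\<lambda>x. 1 - indicator \<Omega> x)"
  shows "(\<lambda>x. \<rho> x * u x) \<in> D"
proof (rule energy_le_of_L2_limit(1)[where C = "E u u"
    and F = "\<lambda>n x. \<rho> x * min (real n + 1) (max (- (real n + 1)) (u x))"])
  show "(\<lambda>x. \<rho> x * u x) \<in> L2 M"
    using assms(2) in_L2[OF assms(1)] measurable
    by (intro L2_I[where g = "\<lambda>x. (u x)^2"]) (auto simp: L2_def split: split_indicator)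
qed (use split_truncations[OF assms] in blast)+

text \<open>Approximate both sides by split truncations, which are orthogonal, and pass to the limit
  twice using weak continuity.\<close>

lemma split_orthogonal:
  assumes u: "u \<in> D" and v: "v \<in> D"
  shows "E (\<lambda>x. indicator \<Omega> x * u x) (\<lambda>x. (1 - indicator \<Omega> x) * v x) = 0"
proof -
  define a where "a n = (\<lambda>x. indicator \<Omega> x * min (real n + 1) (max (- (real n + 1)) (u x)))" for n
  define b where "b n = (\<lambda>x. (1 - indicator \<Omega> x) * min (real n + 1) (max (- (real n + 1)) (v x)))" for n
  have a: "a n \<in> D" "E (a n) (a n) \<le> E u u" for n
    using split_truncations(1,2)[OF u, of "\<lambda>x. indicator \<Omega> x"] by (simp_all add: a_def)
  have a_lim: "(\<lambda>n. L2_sqdist M (a n) (\<lambda>x. indicator \<Omega> x * u x)) \<longlonglongrightarrow> 0"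
    using split_truncations(3)[OF u, of "\<lambda>x. indicator \<Omega> x"] by (simp add: a_def)
  have b: "b n \<in> D" "E (b n) (b n) \<le> E v v" for n
    using split_truncations(1,2)[OF v, of "\<lambda>x. 1 - indicator \<Omega> x"] by (simp_all add: b_def)
  have b_lim: "(\<lambda>n. L2_sqdist M (b n) (\<lambda>x. (1 - indicator \<Omega> x) * v x)) \<longlonglongrightarrow> 0"
    using split_truncations(3)[OF v, of "\<lambda>x. 1 - indicator \<Omega> x"] by (simp add: b_def)
  have u\<Omega>: "(\<lambda>x. indicator \<Omega> x * u x) \<in> D" and v\<Omega>: "(\<lambda>x. (1 - indicator \<Omega> x) * v x) \<in> D"
    using split_in u v by auto
  have ab: "E (a n) (b m) = 0" for n m
  proof -
    let ?c = "real n + real m + 1"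
    have "\<bar>min (real n + 1) (max (- (real n + 1)) (u x))\<bar> \<le> ?c"
      "\<bar>min (real m + 1) (max (- (real m + 1)) (v x))\<bar> \<le> ?c" for x
      by auto
    moreover have "(\<lambda>x. min (real n + 1) (max (- (real n + 1)) (u x))) \<in> D"
      "(\<lambda>x. min (real m + 1) (max (- (real m + 1)) (v x))) \<in> D"
      by (intro clamp(1) u v; simp add: add_pos_nonneg)+
    ultimately show ?thesis
      unfolding a_def b_def by (intro bounded_split_orthogonal) auto
  qed
  have "E (b m) (\<lambda>x. indicator \<Omega> x * u x) = 0" for m
  proof -
    have "(\<lambda>n. E (b m) (a n)) \<longlonglongrightarrow> E (b m) (\<lambda>x. indicator \<Omega> x * u x)"
      using form_tendsto_right[of a "E u u", OF a(1) a(2) a_lim u\<Omega> b(1)] .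
    moreover have "E (b m) (a n) = 0" for n
      using ab commute[OF a(1) b(1)] by simp
    ultimately show ?thesis by (simp add: LIMSEQ_const_iff)
  qed
  then have "E (\<lambda>x. indicator \<Omega> x * u x) (b m) = 0" for m
    using commute[OF u\<Omega> b(1)] by simp
  moreover have "(\<lambda>m. E (\<lambda>x. indicator \<Omega> x * u x) (b m))
      \<longlonglongrightarrow> E (\<lambda>x. indicator \<Omega> x * u x) (\<lambda>x. (1 - indicator \<Omega> x) * v x)"
    using form_tendsto_right[of b "E v v", OF b(1) b(2) b_lim v\<Omega> u\<Omega>] .
  ultimately show ?thesis by (simp add: LIMSEQ_const_iff)
qed

lemma invariant: "invariant_set M D E \<Omega>"
  unfolding invariant_set_def
proof (intro conjI measurable allI impI ballI)
  fix \<alpha> :: real and f u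
  assume "resolvent_sol M D E \<alpha> f u"
  then have u: "u \<in> D" and res: "\<And>v. v \<in> D \<Longrightarrow> E u v + \<alpha> * ip M u v = ip M f v"
    by (auto simp: resolvent_sol_def)
  have u\<Omega>: "(\<lambda>x. indicator \<Omega> x * u x) \<in> D" and uc: "(\<lambda>x. (1 - indicator \<Omega> x) * u x) \<in> D"
    using split_in[OF u] by auto
  have "E (\<lambda>x. indicator \<Omega> x * u x) v + \<alpha> * ip M (\<lambda>x. indicator \<Omega> x * u x) v
      = ip M (\<lambda>x. indicator \<Omega> x * f x) v" if v: "v \<in> D" for v
  proof -
    have v\<Omega>: "(\<lambda>x. indicator \<Omega> x * v x) \<in> D" and vc: "(\<lambda>x. (1 - indicator \<Omega> x) * v x) \<in> D"
      using split_in[OF v] by auto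
    have v_split: "v = (\<lambda>x. indicator \<Omega> x * v x + (1 - indicator \<Omega> x) * v x)"
      and u_split: "u = (\<lambda>x. indicator \<Omega> x * u x + (1 - indicator \<Omega> x) * u x)"
      by (simp_all add: algebra_simps)
    have "E (\<lambda>x. indicator \<Omega> x * u x) v = E (\<lambda>x. indicator \<Omega> x * u x) (\<lambda>x. indicator \<Omega> x * v x)"
      using add_right[OF v\<Omega> vc u\<Omega>] split_orthogonal[OF u v] v_split by simp
    also have "\<dots> = E u (\<lambda>x. indicator \<Omega> x * v x)"
      using add_left[OF u\<Omega> uc v\<Omega>] split_orthogonal[OF v u] commute[OF uc v\<Omega>] u_split by simp
    finally have "E (\<lambda>x. indicator \<Omega> x * u x) v = E u (\<lambda>x. indicator \<Omega> x * v x)" .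
    moreover have "ip M (\<lambda>x. indicator \<Omega> x * u x) v = ip M u (\<lambda>x. indicator \<Omega> x * v x)"
      "ip M (\<lambda>x. indicator \<Omega> x * f x) v = ip M f (\<lambda>x. indicator \<Omega> x * v x)"
      unfolding ip_def by (simp_all add: ac_simps)
    ultimately show ?thesis
      using res[OF v\<Omega>] by simp
  qed
  with u\<Omega> show "resolvent_sol M D E \<alpha> (\<lambda>x. indicator \<Omega> x * f x) (\<lambda>x. indicator \<Omega> x * u x)"
    by (simp add: resolvent_sol_def)
qed

end

section \<open>The form \<open>(1 + \<delta>) B - A\<close>\<close>

locale dominated_pair =
  A: local_dirichlet M D A + B: local_dirichlet M D B
  for M :: "'a::topological_space measure" and D A B +
  fixes \<delta> :: real
  assumes dominated: "\<And>u. u \<in> D \<Longrightarrow> A u u \<le> B u u" and \<delta>_pos: "\<delta> > 0"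
    and B_regular: "regular_form M D B" and dense: "dense_domain M D"
begin

definition E :: "('a \<Rightarrow> real) \<Rightarrow> ('a \<Rightarrow> real) \<Rightarrow> real" where
  "E u v = (1 + \<delta>) * B u v - A u v"

lemma energy_bounds: "u \<in> D \<Longrightarrow> \<delta> * B u u \<le> E u u \<and> E u u \<le> (1 + \<delta>) * B u u"
  using dominated[of u] A.nonneg[of u] by (simp add: E_def algebra_simps)

lemma symmetric: "symmetric_form M D E"
  unfolding symmetric_form_def
proof (intro conjI ballI allI impI)
  show "D \<subseteq> L2 M" using B.in_L2 by blast
  show "(\<lambda>x. 0) \<in> D" by (fact B.zero_in)
  show "(\<lambda>x. u x + v x) \<in> D" if "u \<in> D" "v \<in> D" for u v
    using that by (rule B.add_in)
  show "(\<lambda>x. c * u x) \<in> D" if "u \<in> D" for c u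
    using that by (rule B.cmult_in)
  show "v \<in> D" if "u \<in> D" "v \<in> L2 M" "AE x in M. u x = v x" for u v
    using B.AE_eq_in that by blast
  show "E u w = E v w" if "u \<in> D" "v \<in> L2 M" "AE x in M. u x = v x" "w \<in> D" for u v w
    using A.AE_eq_in[OF that(1-3)] B.AE_eq_in[OF that(1-3)] that(4) by (simp add: E_def)
  show "E u v = E v u" if "u \<in> D" "v \<in> D" for u v
    using A.commute[OF that] B.commute[OF that] by (simp add: E_def)
  show "E (\<lambda>x. u x + v x) w = E u w + E v w" if "u \<in> D" "v \<in> D" "w \<in> D" for u v w
    using A.add_left[OF that] B.add_left[OF that] by (simp add: E_def algebra_simps)
  show "E (\<lambda>x. c * u x) w = c * E u w" if "u \<in> D" "w \<in> D" for c u w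
    using A.cmult_left[OF that] B.cmult_left[OF that] by (simp add: E_def algebra_simps)
  show "0 \<le> E u u" if "u \<in> D" for u
    using energy_bounds[OF that] B.nonneg[OF that] \<delta>_pos mult_nonneg_nonneg[of \<delta> "B u u"]
    by linarith
qed

sublocale E: sym_form M D E
  by unfold_locales (fact symmetric)

lemma E1_le: "w \<in> D \<Longrightarrow> E1 M E w \<le> (1 + \<delta>) * E1 M B w"
  using energy_bounds[of w] mult_nonneg_nonneg[OF less_imp_le[OF \<delta>_pos] ip_self_nonneg[of M w]]
  by (simp add: E1_def algebra_simps)

lemma E1_B_le: "w \<in> D \<Longrightarrow> E1 M B w \<le> (1 + 1 / \<delta>) * E1 M E w"
proof -
  assume w: "w \<in> D"
  have "B w w \<le> E w w / \<delta>"
    using energy_bounds[OF w] \<delta>_pos by (simp add: field_simps)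
  moreover have "0 \<le> E w w" "0 \<le> ip M w w / \<delta>"
    using E.nonneg[OF w] ip_self_nonneg[of M w] \<delta>_pos by simp_all
  moreover have "(1 + 1 / \<delta>) * E1 M E w = E w w + ip M w w + (E w w / \<delta> + ip M w w / \<delta>)"
    using \<delta>_pos by (simp add: E1_def field_simps)
  ultimately show ?thesis
    by (simp add: E1_def)
qed

lemma closed: "closed_form M D E"
  unfolding closed_form_def
proof (intro allI impI)
  fix s :: "nat \<Rightarrow> 'a \<Rightarrow> real"
  assume "(\<forall>n. s n \<in> D) \<and> (\<forall>e>0. \<exists>N. \<forall>n\<ge>N. \<forall>k\<ge>N. E1 M E (\<lambda>x. s n x - s k x) < e)"
  then have s: "\<And>n. s n \<in> D"
    and Cauchy: "\<And>e. e > 0 \<Longrightarrow> \<exists>N. \<forall>n\<ge>N. \<forall>k\<ge>N. E1 M E (\<lambda>x. s n x - s k x) < e"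
    by auto
  have "\<exists>N. \<forall>n\<ge>N. \<forall>k\<ge>N. E1 M B (\<lambda>x. s n x - s k x) < e" if "e > 0" for e
  proof -
    have k: "1 + 1 / \<delta> > 0" using \<delta>_pos by (simp add: add_pos_pos)
    with that have "e / (1 + 1 / \<delta>) > 0" by simp
    then obtain N where N: "\<forall>n\<ge>N. \<forall>k\<ge>N. E1 M E (\<lambda>x. s n x - s k x) < e / (1 + 1 / \<delta>)"
      using Cauchy by blast
    have "E1 M B (\<lambda>x. s n x - s k x) < e" if "n \<ge> N" "k \<ge> N" for n k
    proof -
      have "E1 M B (\<lambda>x. s n x - s k x) \<le> (1 + 1 / \<delta>) * E1 M E (\<lambda>x. s n x - s k x)"
        by (rule E1_B_le[OF B.diff_in[OF s s]])
      also have "\<dots> < (1 + 1 / \<delta>) * (e / (1 + 1 / \<delta>))"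
        using N that k by (intro mult_strict_left_mono) auto
      also have "\<dots> = e"
        using k by simp
      finally show ?thesis .
    qed
    then show ?thesis by blast
  qed
  then obtain u where u: "u \<in> D" and lim: "(\<lambda>n. E1 M B (\<lambda>x. s n x - u x)) \<longlonglongrightarrow> 0"
    using B.closed s unfolding closed_form_def by blast
  have "(\<lambda>n. E1 M E (\<lambda>x. s n x - u x)) \<longlonglongrightarrow> 0"
  proof (rule tendsto_sandwich[OF _ _ tendsto_const])
    show "(\<lambda>n. (1 + \<delta>) * E1 M B (\<lambda>x. s n x - u x)) \<longlonglongrightarrow> 0"
      using tendsto_mult_right_zero[OF lim] by simp
    show "\<forall>\<^sub>F n in sequentially. 0 \<le> E1 M E (\<lambda>x. s n x - u x)"
    proof (intro always_eventually allI)
      fix n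
      show "0 \<le> E1 M E (\<lambda>x. s n x - u x)"
        using E.nonneg[OF B.diff_in[OF s u], of n] ip_self_nonneg[of M "\<lambda>x. s n x - u x"]
        unfolding E1_def by linarith
    qed
    show "\<forall>\<^sub>F n in sequentially. E1 M E (\<lambda>x. s n x - u x) \<le> (1 + \<delta>) * E1 M B (\<lambda>x. s n x - u x)"
      using E1_le[OF B.diff_in[OF s u]] by (intro always_eventually allI)
  qed
  with u show "\<exists>u\<in>D. (\<lambda>n. E1 M E (\<lambda>x. s n x - u x)) \<longlonglongrightarrow> 0" by blast
qed

sublocale E: closed_sym_form M D E
  by unfold_locales (fact closed)

lemma markov_continuous:
  assumes v: "v \<in> D" "continuous_on (space M) v"
  shows "E (\<lambda>x. min 1 (max 0 (v x))) (\<lambda>x. min 1 (max 0 (v x))) \<le> E v v"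
proof -
  define T where "T = (\<lambda>x. min 1 (max 0 (v x)))"
  have T: "T \<in> D" using B.unit_contraction[OF v(1)] by (simp add: T_def)
  have w: "(\<lambda>x. v x - T x) \<in> D" using v(1) T by (rule B.diff_in)
  have "E T (\<lambda>x. v x - T x) = 0"
    using A.unit_contraction_orthogonal[OF v] B.unit_contraction_orthogonal[OF v]
    by (simp add: E_def T_def)
  moreover have "E v v = E (\<lambda>x. T x + (v x - T x)) (\<lambda>x. T x + (v x - T x))"
    by simp
  ultimately have "E v v = E T T + E (\<lambda>x. v x - T x) (\<lambda>x. v x - T x)"
    using E.quadratic_add[OF T w] by simp
  with E.nonneg[OF w] show ?thesis
    by (simp add: T_def)
qed

lemma exists_continuous_approximation:
  assumes u: "u \<in> D"
  obtains V where "\<And>n. V n \<in> D" "\<And>n. continuous_on (space M) (V n)"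
    and "(\<lambda>n. E (\<lambda>x. V n x - u x) (\<lambda>x. V n x - u x)) \<longlonglongrightarrow> 0"
    and "(\<lambda>n. L2_sqdist M (V n) u) \<longlonglongrightarrow> 0"
proof -
  have "\<forall>n. \<exists>v\<in>D. continuous_on (space M) v \<and> E1 M B (\<lambda>x. u x - v x) < 1 / (real n + 1)"
    using B_regular u unfolding regular_form_def by simp
  then obtain V where V: "\<And>n. V n \<in> D" "\<And>n. continuous_on (space M) (V n)"
    and V_close: "\<And>n. E1 M B (\<lambda>x. u x - V n x) < 1 / (real n + 1)"
    by metis
  have lim_0: "(\<lambda>n. 1 / (real n + 1)) \<longlonglongrightarrow> 0"
    using LIMSEQ_inverse_real_of_nat by (simp add: inverse_eq_divide add.commute)
  have d: "(\<lambda>x. V n x - u x) \<in> D" for n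
    using V(1) u by (rule B.diff_in)
  have E1_small: "E1 M B (\<lambda>x. V n x - u x) < 1 / (real n + 1)" for n
    using V_close[of n] B.quadratic_diff[OF u V(1), of n] B.quadratic_diff[OF V(1) u, of n]
      B.commute[OF u V(1), of n] L2_sqdist_commute[of M u "V n"]
    by (simp add: E1_def)
  have B_small: "B (\<lambda>x. V n x - u x) (\<lambda>x. V n x - u x) < 1 / (real n + 1)"
    and L2_small: "L2_sqdist M (V n) u < 1 / (real n + 1)" for n
    using E1_small[of n] B.nonneg[OF d, of n] ip_self_nonneg[of M "\<lambda>x. V n x - u x"]
    unfolding E1_def by linarith+
  have "(\<lambda>n. E (\<lambda>x. V n x - u x) (\<lambda>x. V n x - u x)) \<longlonglongrightarrow> 0"
  proof (rule tendsto_sandwich[OF _ _ tendsto_const])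
    show "(\<lambda>n. (1 + \<delta>) * (1 / (real n + 1))) \<longlonglongrightarrow> 0"
      using tendsto_mult_right_zero[OF lim_0] by simp
    show "\<forall>\<^sub>F n in sequentially. E (\<lambda>x. V n x - u x) (\<lambda>x. V n x - u x) \<le> (1 + \<delta>) * (1 / (real n + 1))"
      using energy_bounds[OF d] B_small \<delta>_pos
      by (intro always_eventually allI) (smt (verit) mult_left_mono)
  qed (auto intro: always_eventually E.nonneg d)
  moreover have "(\<lambda>n. L2_sqdist M (V n) u) \<longlonglongrightarrow> 0"
    using L2_small by (intro tendsto_sandwich[OF _ _ tendsto_const lim_0])
      (auto intro: always_eventually ip_self_nonneg less_imp_le)
  ultimately show thesis
    using that V by blast
qed

text \<open>The contraction inequality for continuous approximants passes to the limit by lower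
  semicontinuity.\<close>

lemma markov: "markovian M D E"
  unfolding markovian_def
proof (intro ballI conjI)
  fix u assume u: "u \<in> D"
  show "(\<lambda>x. min 1 (max 0 (u x))) \<in> D"
    using B.unit_contraction[OF u] by blast
  obtain V where V: "\<And>n. V n \<in> D" "\<And>n. continuous_on (space M) (V n)"
    and lim_E: "(\<lambda>n. E (\<lambda>x. V n x - u x) (\<lambda>x. V n x - u x)) \<longlonglongrightarrow> 0"
    and lim_L2: "(\<lambda>n. L2_sqdist M (V n) u) \<longlonglongrightarrow> 0"
    using exists_continuous_approximation[OF u] by blast
  have "(\<lambda>n. E (V n) (V n)) \<longlonglongrightarrow> E u u"
    using lim_E by (rule E.energy_tendsto[OF u V(1)])
  moreover have "(\<lambda>n. L2_sqdist M (\<lambda>x. min 1 (max 0 (V n x))) (\<lambda>x. min 1 (max 0 (u x)))) \<longlonglongrightarrow> 0"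
    using B.in_L2[OF V(1)] B.in_L2[OF u]
    by (intro tendsto_sandwich[OF _ _ tendsto_const lim_L2])
      (auto intro: always_eventually ip_self_nonneg L2_sqdist_unit_contraction_le)
  ultimately show "E (\<lambda>x. min 1 (max 0 (u x))) (\<lambda>x. min 1 (max 0 (u x))) \<le> E u u"
    using E.energy_le_of_L2_limit_tendsto[where F = "\<lambda>n x. min 1 (max 0 (V n x))"
        and c = "\<lambda>n. E (V n) (V n)" and f = "\<lambda>x. min 1 (max 0 (u x))"]
      B.unit_contraction[OF V(1)] markov_continuous[OF V(1,2)] B.in_L2 B.unit_contraction[OF u]
    by blast
qed

lemma regular: "regular_form M D E"
  unfolding regular_form_def
proof (intro conjI ballI allI impI)
  fix u and e :: real assume u: "u \<in> D" and "e > 0"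
  then have "e / (1 + \<delta>) > 0" using \<delta>_pos by simp
  then obtain v where v: "v \<in> D" "continuous_on (space M) v" "E1 M B (\<lambda>x. u x - v x) < e / (1 + \<delta>)"
    using B_regular u unfolding regular_form_def by blast
  have "E1 M E (\<lambda>x. u x - v x) \<le> (1 + \<delta>) * E1 M B (\<lambda>x. u x - v x)"
    using u v(1) by (intro E1_le B.diff_in)
  also have "\<dots> < e"
    using v(3) \<delta>_pos by (simp add: field_simps)
  finally show "\<exists>v\<in>D. continuous_on (space M) v \<and> E1 M E (\<lambda>x. u x - v x) < e"
    using v by blast
qed (use B_regular in \<open>auto simp: regular_form_def\<close>)

lemma local: "local_form M D E"
  using A.local B.local by (simp add: local_form_def E_def)

lemma conservative: "conservative_form M D E"
  unfolding conservative_form_def resolvent_sol_def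
proof (intro allI impI conjI ballI)
  fix \<alpha> :: real and v assume "\<alpha> > 0" "v \<in> D"
  moreover have "ip M (\<lambda>x. 1 / \<alpha>) v = 1 / \<alpha> * ip M (\<lambda>x. 1) v"
    by (simp add: ip_def)
  ultimately show "E (\<lambda>x. 1 / \<alpha>) v + \<alpha> * ip M (\<lambda>x. 1 / \<alpha>) v = ip M (\<lambda>x. 1) v"
    using A.const_left B.const_left by (simp add: E_def)
qed (rule B.const_in)

lemma irreducible:
  assumes "irreducible_form M D B"
  shows "irreducible_form M D E"
  unfolding irreducible_form_def
proof (intro allI impI)
  fix \<Omega> assume inv: "invariant_set M D E \<Omega>"
  have "resolvent_sol M D E 1 (\<lambda>x. 1) (\<lambda>x. 1)"
    using conservative[unfolded conservative_form_def, rule_format, of 1] by simp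
  moreover have inv_rule: "\<And>\<alpha> f u. \<alpha> > 0 \<Longrightarrow> f \<in> L2 M \<Longrightarrow> resolvent_sol M D E \<alpha> f u
      \<Longrightarrow> resolvent_sol M D E \<alpha> (\<lambda>x. indicator \<Omega> x * f x) (\<lambda>x. indicator \<Omega> x * u x)"
    using inv unfolding invariant_set_def by blast
  ultimately have "resolvent_sol M D E 1 (\<lambda>x. indicator \<Omega> x * 1) (\<lambda>x. indicator \<Omega> x * 1)"
    using inv_rule[of 1 "\<lambda>x. 1" "\<lambda>x. 1"] L2_const[OF A.finite, of 1] by simp
  then have \<Omega>: "(\<lambda>x. indicator \<Omega> x) \<in> D" "E (\<lambda>x. indicator \<Omega> x) (\<lambda>x. indicator \<Omega> x) = 0"
    by (auto simp: resolvent_sol_def)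
  then have "B (\<lambda>x. indicator \<Omega> x) (\<lambda>x. indicator \<Omega> x) = 0"
    using energy_bounds[OF \<Omega>(1)] B.nonneg[OF \<Omega>(1)] \<delta>_pos by (simp add: mult_le_0_iff)
  then interpret B\<Omega>: null_indicator M D B \<Omega>
    using inv \<Omega>(1) by unfold_locales (auto simp: invariant_set_def)
  show "emeasure M \<Omega> = 0 \<or> emeasure M (space M - \<Omega>) = 0"
    using assms B\<Omega>.invariant unfolding irreducible_form_def by blast
qed

lemma dirichlet: "dirichlet_form M D E"
  using symmetric closed markov dense unfolding dirichlet_form_def by blast

end

lemma local_dirichlet_if_dirichlet_form:
  assumes "dirichlet_form M D E" "local_form M D E" "conservative_form M D E"
    and "compact (space M)" "finite_measure M"
  shows "local_dirichlet M D E"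
  by (intro local_dirichlet.intro dirichlet.intro closed_sym_form.intro sym_form.intro
      local_dirichlet_axioms.intro dirichlet_axioms.intro closed_sym_form_axioms.intro)
    (use assms in \<open>simp_all add: dirichlet_form_def\<close>)

theorem theorem2p1:
  fixes M :: "'a::metric_space measure"
    and D :: "('a \<Rightarrow> real) set"
    and A B :: "('a \<Rightarrow> real) \<Rightarrow> ('a \<Rightarrow> real) \<Rightarrow> real"
    and \<delta> :: real
  assumes "compact (space M)"
    and "sets M = sets (restrict_space borel (space M))"
    and "finite_measure M"
    and "radon_measure M"
    and "dirichlet_form M D A" and "local_form M D A" and "regular_form M D A"
    and "conservative_form M D A" and "irreducible_form M D A"
    and "dirichlet_form M D B" and "local_form M D B" and "regular_form M D B"
    and "conservative_form M D B" and "irreducible_form M D B"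
    and "\<forall>u\<in>D. A u u \<le> B u u"
    and "\<delta> > 0"
  shows "dirichlet_form M D (\<lambda>u v. (1 + \<delta>) * B u v - A u v)
       \<and> regular_form M D (\<lambda>u v. (1 + \<delta>) * B u v - A u v)
       \<and> local_form M D (\<lambda>u v. (1 + \<delta>) * B u v - A u v)
       \<and> conservative_form M D (\<lambda>u v. (1 + \<delta>) * B u v - A u v)
       \<and> irreducible_form M D (\<lambda>u v. (1 + \<delta>) * B u v - A u v)"
proof -
  have "local_dirichlet M D A" "local_dirichlet M D B"
    using local_dirichlet_if_dirichlet_form assms(1,3,5,6,8,10,11,13) by blast+
  moreover have "dominated_pair_axioms M D A B \<delta>"
    using assms(10,12,15,16) by unfold_locales (auto simp: dirichlet_form_def)
  ultimately interpret dominated_pair M D A B \<delta>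
    by (intro dominated_pair.intro)
  have "(\<lambda>u v. (1 + \<delta>) * B u v - A u v) = E"
    by (simp add: fun_eq_iff E_def)
  then show ?thesis
    using dirichlet regular local conservative irreducible assms(14) by simp
qed

end
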